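(* Let $k>0$ and let $T:(\mathbb{C}^{n\times n})^{\otimes k}\to\mathbb{C}$ be a $GL$-invariant linear map. For each object $W$ of $\mathrm{St}\mathbb{C}^n$ define $\mathbf{Cf}_T(W):\mathcal{C}hart(W)\to\Omega^k_{\mathrm{hol}}(W)$ on $m$-simplices by sending $(\rho_0,\ldots,\rho_m)$ to the labeling of the cells of $\Delta^m$ in which every cell of dimension $\neq k$ is labeled $0$ and every $k$-cell $(i_0<\cdots<i_k)$ is labeled by $\tau_T(\rho_{i_0},\ldots,\rho_{i_k})\in\Omega^k_{\mathrm{hol}}(W)$ (in particular, for $m<k$ all labels are $0$). Then these labelings are $m$-simplices of $\Omega^k_{\mathrm{hol}}(W)$, each $\mathbf{Cf}_T(W)$ is a map of simplicial sets, and $\mathbf{Cf}_T:\mathcal{C}hart\to\Omega^k_{\mathrm{hol}}$ is a map of $\infty$-prestacks (natural in $W$).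
   Context: $\mathrm{St}\mathbb{C}^n$ is the category whose objects are $n$-dimensional Stein manifolds biholomorphic to an open subset of $\mathbb{C}^n$, and whose morphisms are holomorphic embeddings (biholomorphisms onto an open image); an $\infty$-prestack is a functor $(\mathrm{St}\mathbb{C}^n)^{op}\to\mathrm{sSet}$. $\mathcal{C}hart(W)$ is the $0$-coskeletal simplicial set whose $m$-simplices are $(m+1)$-tuples $(\rho_0,\ldots,\rho_m)$ of biholomorphisms $\rho_j:W\to V_j$ onto open subsets $V_j\subset\mathbb{C}^n$; along $\phi:W'\to W$ it restricts by $\rho\mapsto\rho\circ\phi$ (with codomain restricted to the image). $\Omega^k_{\mathrm{hol}}(W):=DK(\Omega^k_{\mathrm{hol}}(W)[-k])$, whose $m$-simplices are labelings of the $k$-cells of $\Delta^m$ by holomorphic $k$-forms on $W$ (all other cells labeled $0$) such that the alternating sum of the labels of the faces of each $(k+1)$-cell vanishes; faces restrict labelings, degeneracies pull back labelings along codegeneracies with labels of cells having a repeated index set to $0$; restriction along $\phi$ is pullback of forms. A linear map $T:(\mathbb{C}^{n\times n})^{\otimes k}\to\mathbb{C}$ is $GL$-invariant if $T(A^{-1}M_1A,\ldots,A^{-1}M_kA)=T(M_1,\ldots,M_k)$ for all $A\in GL_n(\mathbb{C})$. It is extended to matrix-valued $1$-forms by $T[\alpha_1\otimes M_1,\ldots,\alpha_k\otimes M_k]:=\alpha_1\wedge\cdots\wedge\alpha_k\cdot T(M_1,\ldots,M_k)$ and multilinearity. For a biholomorphism $\varphi$ between open subsets of $\mathbb{C}^n$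 with Jacobian matrix $\dot\varphi$, set $\theta(\varphi):=\dot\varphi^{-1}\,d\dot\varphi$ (a matrix-valued $1$-form on the source of $\varphi$) and $\varphi^\sharp(\alpha\otimes M)(x):=(\varphi^*\alpha)(x)\otimes \dot\varphi(x)^{-1}M\dot\varphi(x)$. For a tuple of charts $(\sigma_0,\ldots,\sigma_k)$, $\sigma_j:W\to V_j$, put $\phi_{p,q}:=\sigma_p\circ\sigma_q^{-1}:V_q\to V_p$, $\theta_r:=\phi_{r,k}^\sharp\big(\theta(\phi_{r-1,r})\big)$ (a matrix-valued $1$-form on $V_k$) for $r=1,\ldots,k$, and $\tau_T(\sigma_0,\ldots,\sigma_k):=\sigma_k^*\big(T[\theta_1,\ldots,\theta_k]\big)$. *)

theory Defs
  imports "HOL-Analysis.Analysis" "HOL-Combinatorics.Permutations"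
begin

definition cvscale :: "complex \<Rightarrow> complex^'n \<Rightarrow> complex^'n" where
  "cvscale c v = (\<chi> j. c * v $ j)"

definition cmscale :: "complex \<Rightarrow> complex^'n^'n \<Rightarrow> complex^'n^'n" where
  "cmscale c M = (\<chi> i j. c * M $ i $ j)"

definition hol_fun :: "(complex^'n) set \<Rightarrow> (complex^'n \<Rightarrow> complex) \<Rightarrow> bool" where
  "hol_fun U f \<longleftrightarrow> (\<forall>x\<in>U. \<exists>D. (f has_derivative D) (at x) \<and>
                        (\<forall>v. D (cvscale \<i> v) = \<i> * D v))"

definition hol_map :: "(complex^'n) set \<Rightarrow> (complex^'n \<Rightarrow> complex^'m) \<Rightarrow> bool" where
  "hol_map U F \<longleftrightarrow> (\<forall>i. hol_fun U (\<lambda>x. F x $ i))"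

definition biholo :: "(complex^'n) set \<Rightarrow> (complex^'n \<Rightarrow> complex^'n) \<Rightarrow> bool" where
  "biholo U F \<longleftrightarrow> open U \<and> hol_map U F \<and> inj_on F U \<and> open (F ` U)
                   \<and> hol_map (F ` U) (inv_into U F)"

text \<open>Objects of St C^n, represented by an open subset of C^n (biholomorphic model):
  Stein = holomorphically convex open subset (Cartan--Thullen).\<close>
definition hol_hull :: "(complex^'n) set \<Rightarrow> (complex^'n) set \<Rightarrow> (complex^'n) set" where
  "hol_hull U K = {z\<in>U. \<forall>f. hol_fun U f \<longrightarrow> norm (f z) \<le> (SUP w\<in>K. norm (f w))}"

definition stein_open :: "(complex^'n) set \<Rightarrow> bool" where
  "stein_open U \<longleftrightarrow> open U \<and>
     (\<forall>K. compact K \<and> K \<noteq> {} \<and> K \<subseteq> U \<longrightarrow> compact (hol_hull U K))"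

definition chart :: "(complex^'n) set \<Rightarrow> (complex^'n \<Rightarrow> complex^'n) \<Rightarrow> bool" where
  "chart U \<rho> \<longleftrightarrow> biholo U \<rho>"

text \<open>Morphisms U' \<rightarrow> U of St C^n: holomorphic embeddings (biholomorphic onto open image).\<close>
definition hol_embed :: "(complex^'n) set \<Rightarrow> (complex^'n) set \<Rightarrow> (complex^'n \<Rightarrow> complex^'n) \<Rightarrow> bool" where
  "hol_embed U' U \<phi> \<longleftrightarrow> biholo U' \<phi> \<and> \<phi> ` U' \<subseteq> U"

definition minv :: "complex^'n^'n \<Rightarrow> complex^'n^'n" where
  "minv A = (SOME B. A ** B = mat 1 \<and> B ** A = mat 1)"

definition jac :: "(complex^'n \<Rightarrow> complex^'n) \<Rightarrow> complex^'n \<Rightarrow> complex^'n^'n" where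
  "jac F x = (\<chi> i j. frechet_derivative (\<lambda>y. F y $ i) (at x) (axis j 1))"

definition dmat :: "(complex^'n \<Rightarrow> complex^'n^'n) \<Rightarrow> complex^'n \<Rightarrow> complex^'n \<Rightarrow> complex^'n^'n" where
  "dmat M x v = (\<chi> i j. frechet_derivative (\<lambda>y. M y $ i $ j) (at x) v)"

type_synonym 'n mform = "complex^'n \<Rightarrow> complex^'n \<Rightarrow> complex^'n^'n"

definition theta :: "(complex^'n \<Rightarrow> complex^'n) \<Rightarrow> 'n mform" where
  "theta \<phi> x v = minv (jac \<phi> x) ** dmat (jac \<phi>) x v"

definition sharp :: "(complex^'n \<Rightarrow> complex^'n) \<Rightarrow> 'n mform \<Rightarrow> 'n mform" where
  "sharp \<phi> \<Theta> x v = minv (jac \<phi> x) ** \<Theta> (\<phi> x) (jac \<phi> x *v v) ** jac \<phi> x"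

text \<open>Scalar k-forms: point \<Rightarrow> (list of tangent vectors, only first k used) \<Rightarrow> value.\<close>
type_synonym 'n kform = "complex^'n \<Rightarrow> (nat \<Rightarrow> complex^'n) \<Rightarrow> complex"

text \<open>T[Theta_1,...,Theta_k] with wedge convention
  (a_1 \<and> ... \<and> a_k)(v_0,...,v_(k-1)) = det (a_r(v_s)).\<close>
definition Twedge :: "((nat \<Rightarrow> complex^'n^'n) \<Rightarrow> complex) \<Rightarrow> nat \<Rightarrow> (nat \<Rightarrow> 'n mform) \<Rightarrow> 'n kform" where
  "Twedge T k \<Theta>s x v =
     (\<Sum>p | p permutes {..<k}. of_int (sign p) * T (\<lambda>r. \<Theta>s (Suc r) x (v (p r))))"

definition pullk :: "(complex^'n \<Rightarrow> complex^'n) \<Rightarrow> 'n kform \<Rightarrow> 'n kform" where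
  "pullk \<phi> \<omega> x v = \<omega> (\<phi> x) (\<lambda>i. jac \<phi> x *v v i)"

text \<open>tau_T(sigma_0,...,sigma_k) for charts of U given as a list of length k+1.\<close>
definition tau :: "((nat \<Rightarrow> complex^'n^'n) \<Rightarrow> complex) \<Rightarrow> nat \<Rightarrow> (complex^'n) set
                   \<Rightarrow> (complex^'n \<Rightarrow> complex^'n) list \<Rightarrow> 'n kform" where
  "tau T k U \<sigma>s =
    (let \<phi> = (\<lambda>p q. (\<sigma>s ! p) \<circ> inv_into U (\<sigma>s ! q));
         \<Theta>s = (\<lambda>r. sharp (\<phi> r k) (theta (\<phi> (r - 1) r)))
     in pullk (\<sigma>s ! k) (Twedge T k \<Theta>s))"

definition multilin :: "(complex \<Rightarrow> 'a::plus \<Rightarrow> 'a) \<Rightarrow> nat \<Rightarrow> ((nat \<Rightarrow> 'a) \<Rightarrow> complex) \<Rightarrow> bool" where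
  "multilin scl k F \<longleftrightarrow>
     (\<forall>r<k. \<forall>v a b. F (v(r := a + b)) = F (v(r := a)) + F (v(r := b))) \<and>
     (\<forall>r<k. \<forall>v a c. F (v(r := scl c a)) = c * F (v(r := a))) \<and>
     (\<forall>v w. (\<forall>r<k. v r = w r) \<longrightarrow> F v = F w)"

definition gl_invariant :: "nat \<Rightarrow> ((nat \<Rightarrow> complex^'n^'n) \<Rightarrow> complex) \<Rightarrow> bool" where
  "gl_invariant k T \<longleftrightarrow>
     (\<forall>A M. invertible A \<longrightarrow> T (\<lambda>r. minv A ** M r ** A) = T M)"

definition alternating :: "nat \<Rightarrow> ((nat \<Rightarrow> 'a) \<Rightarrow> complex) \<Rightarrow> bool" where
  "alternating k F \<longleftrightarrow> (\<forall>v r s. r < k \<and> s < k \<and> r \<noteq> s \<and> v r = v s \<longrightarrow> F v = 0)"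

definition hol_kform :: "nat \<Rightarrow> (complex^'n) set \<Rightarrow> 'n kform \<Rightarrow> bool" where
  "hol_kform k U \<omega> \<longleftrightarrow>
     (\<forall>x\<in>U. multilin cvscale k (\<omega> x) \<and> alternating k (\<omega> x)) \<and>
     (\<forall>js. hol_fun U (\<lambda>x. \<omega> x (\<lambda>i. axis (js i) 1)))"

definition kcells :: "nat \<Rightarrow> nat \<Rightarrow> nat set set" where
  "kcells k m = {c. c \<subseteq> {0..m} \<and> card c = Suc k}"

definition chart_simplex :: "(complex^'n) set \<Rightarrow> nat \<Rightarrow> (nat \<Rightarrow> complex^'n \<Rightarrow> complex^'n) \<Rightarrow> bool" where
  "chart_simplex U m \<rho> \<longleftrightarrow> (\<forall>j\<le>m. chart U (\<rho> j))"

text \<open>m-simplices of Omega^k_hol(U): labelings of k-cells by holomorphic k-forms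
  (other cells labelled 0 implicitly) with vanishing alternating face sums on (k+1)-cells.\<close>
definition omega_simplex :: "nat \<Rightarrow> (complex^'n) set \<Rightarrow> nat \<Rightarrow> (nat set \<Rightarrow> 'n kform) \<Rightarrow> bool" where
  "omega_simplex k U m L \<longleftrightarrow>
     (\<forall>c\<in>kcells k m. hol_kform k U (L c)) \<and>
     (\<forall>d\<in>kcells (Suc k) m. \<forall>x\<in>U. \<forall>v.
        (\<Sum>j<Suc (Suc k). (-1)^j * L (d - {sorted_list_of_set d ! j}) x v) = 0)"

text \<open>Simplicial operator along a monotone map alpha: [m'] \<rightarrow> [m] on labelings
  (degenerate images labelled 0).\<close>
definition omega_act :: "(nat \<Rightarrow> nat) \<Rightarrow> (nat set \<Rightarrow> 'n kform) \<Rightarrow> nat set \<Rightarrow> 'n kform" where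
  "omega_act \<alpha> L c = (if inj_on \<alpha> c then L (\<alpha> ` c) else (\<lambda>x v. 0))"

definition Cf :: "((nat \<Rightarrow> complex^'n^'n) \<Rightarrow> complex) \<Rightarrow> nat \<Rightarrow> (complex^'n) set
                  \<Rightarrow> (nat \<Rightarrow> complex^'n \<Rightarrow> complex^'n) \<Rightarrow> nat set \<Rightarrow> 'n kform" where
  "Cf T k U \<rho> c = tau T k U (map \<rho> (sorted_list_of_set c))"

end

theory Submission
  imports Defs "HOL-Complex_Analysis.Cauchy_Integral_Formula"
begin

text \<open>For a chart \<open>\<sigma>\<close> of \<open>W\<close> let \<open>theta \<sigma> = J\<sigma>\<inverse> dJ\<sigma>\<close> be the logarithmic derivative of its
  Jacobian. The chain rule \<open>theta (G \<circ> F) = F\<^sup>\<sharp> (theta G) + theta F\<close> and the functoriality of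
  \<open>\<sharp>\<close> show that the pull-back along \<open>\<sigma>\<^sub>k\<close> of the form \<open>\<Theta>\<^sub>r\<close> built from the transition
  maps is \<open>theta \<sigma>\<^bsub>r-1\<^esub> - theta \<sigma>\<^sub>r\<close>, conjugated by the Jacobian of \<open>\<sigma>\<^sub>k\<close>. By
  \<open>GL\<close>-invariance of \<open>T\<close> the conjugation disappears, so that on \<open>W\<close>
  \<open>\<tau>\<^sub>T(\<sigma>\<^sub>0, \<dots>, \<sigma>\<^sub>k) = T[theta \<sigma>\<^sub>0 - theta \<sigma>\<^sub>1, \<dots>, theta \<sigma>\<^bsub>k-1\<^esub> - theta \<sigma>\<^sub>k]\<close>.

  Everything follows from this closed formula. It is a holomorphic \<open>k\<close>-form, because partial
  derivatives of holomorphic functions are holomorphic (Cauchy's integral formula on coordinate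
  discs). It vanishes when two consecutive charts coincide, which takes care of degenerate
  simplicial operators. Its alternating sum over the faces of a \<open>(k+1)\<close>-cell telescopes by
  multilinearity of \<open>T\<close>. Naturality in \<open>W\<close> holds since the transition maps of restricted charts
  are restrictions of the original ones, and \<open>theta\<close> and \<open>\<sharp>\<close> are local.\<close>

section \<open>Holomorphic functions of several complex variables\<close>

definition cpartial :: "(complex^'n \<Rightarrow> complex) \<Rightarrow> 'n \<Rightarrow> complex^'n \<Rightarrow> complex" where
  "cpartial f j x = frechet_derivative f (at x) (axis j 1)"

lemma jac_component: "jac F x $ i $ j = cpartial (\<lambda>y. F y $ i) j x"
  by (simp add: jac_def cpartial_def)

lemma complex_linear_cvscale:
  assumes "linear D" and "\<And>v. D (cvscale \<i> v) = \<i> * D v"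
  shows "D (cvscale c v) = c * (D v :: complex)"
proof -
  have "cvscale c v = Re c *\<^sub>R v + Im c *\<^sub>R cvscale \<i> v"
    by (simp add: cvscale_def vec_eq_iff)
       (metis complex_eq mult.assoc mult.commute scaleR_conv_of_real distrib_right)
  then have "D (cvscale c v) = Re c *\<^sub>R D v + Im c *\<^sub>R D (cvscale \<i> v)"
    using assms(1) by (simp add: linear_add linear_scale)
  also have "\<dots> = c * D v"
    using assms(2) by (simp add: scaleR_conv_of_real)
      (metis complex_eq distrib_right mult.assoc mult.commute)
  finally show ?thesis .
qed

lemma hol_fun_has_derivative:
  assumes "hol_fun U f" and "x \<in> U"
  shows "(f has_derivative (\<lambda>v. \<Sum>j\<in>UNIV. v $ j * cpartial f j x)) (at x)"
proof -
  obtain D where D: "(f has_derivative D) (at x)" and cl: "\<And>v. D (cvscale \<i> v) = \<i> * D v"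
    using assms unfolding hol_fun_def by blast
  have lin: "linear D" using D has_derivative_linear by blast
  have fd: "frechet_derivative f (at x) = D" using D frechet_derivative_at by metis
  have "D v = (\<Sum>j\<in>UNIV. v $ j * cpartial f j x)" for v
  proof -
    have "cvscale (v $ j) (axis j 1) = axis j (v $ j)" for j
      by (simp add: cvscale_def axis_def vec_eq_iff)
    then have "(\<Sum>j\<in>UNIV. cvscale (v $ j) (axis j 1)) = v"
      by (simp add: vec_eq_iff axis_def)
    then have "D v = D (\<Sum>j\<in>UNIV. cvscale (v $ j) (axis j 1))"
      by simp
    also have "\<dots> = (\<Sum>j\<in>UNIV. v $ j * D (axis j 1))"
      using lin complex_linear_cvscale[OF lin cl] by (simp add: linear_sum)
    finally show ?thesis by (simp add: cpartial_def fd)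
  qed
  then have "D = (\<lambda>v. \<Sum>j\<in>UNIV. v $ j * cpartial f j x)" by auto
  then show ?thesis using D by simp
qed

lemma cpartial_eq:
  assumes "(f has_derivative (\<lambda>v. \<Sum>j\<in>UNIV. v $ j * c j)) (at x)"
  shows "cpartial f l x = c l"
proof -
  have "cpartial f l x = (\<Sum>j\<in>UNIV. axis l 1 $ j * c j)"
    unfolding cpartial_def frechet_derivative_at[OF assms, symmetric] ..
  also have "\<dots> = c l"
    by (simp add: axis_def if_distrib[of "\<lambda>a. a * _"] cong: if_cong)
  finally show ?thesis .
qed

lemma hol_funI:
  assumes "\<And>x. x \<in> U \<Longrightarrow> \<exists>c. (f has_derivative (\<lambda>v. \<Sum>j\<in>UNIV. v $ j * c j)) (at x)"
  shows "hol_fun U f"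
  unfolding hol_fun_def
proof
  fix x assume "x \<in> U"
  then obtain c where "(f has_derivative (\<lambda>v. \<Sum>j\<in>UNIV. v $ j * c j)) (at x)"
    using assms by blast
  moreover have "(\<Sum>j\<in>UNIV. cvscale \<i> v $ j * c j) = \<i> * (\<Sum>j\<in>UNIV. v $ j * c j)" for v
    by (simp add: cvscale_def sum_distrib_left mult.assoc)
  ultimately show "\<exists>D. (f has_derivative D) (at x) \<and> (\<forall>v. D (cvscale \<i> v) = \<i> * D v)"
    by blast
qed

lemma hol_fun_continuous_on: "hol_fun U f \<Longrightarrow> continuous_on U f"
  unfolding hol_fun_def
  by (meson continuous_at_imp_continuous_on has_derivative_continuous)

lemma hol_fun_const: "hol_fun U (\<lambda>x. c)"
  by (rule hol_funI) (rule exI[of _ "\<lambda>_. 0"], simp)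

lemma hol_fun_add:
  assumes "hol_fun U f" and "hol_fun U g"
  shows "hol_fun U (\<lambda>x. f x + g x)"
proof (rule hol_funI)
  fix x assume "x \<in> U"
  from has_derivative_add[OF hol_fun_has_derivative[OF assms(1) this]
      hol_fun_has_derivative[OF assms(2) this]]
  show "\<exists>c. ((\<lambda>x. f x + g x) has_derivative (\<lambda>v. \<Sum>j\<in>UNIV. v $ j * c j)) (at x)"
    by (intro exI[of _ "\<lambda>j. cpartial f j x + cpartial g j x"])
       (simp add: sum.distrib distrib_left)
qed

lemma hol_fun_diff:
  assumes "hol_fun U f" and "hol_fun U g"
  shows "hol_fun U (\<lambda>x. f x - g x)"
proof (rule hol_funI)
  fix x assume "x \<in> U"
  from has_derivative_diff[OF hol_fun_has_derivative[OF assms(1) this]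
      hol_fun_has_derivative[OF assms(2) this]]
  show "\<exists>c. ((\<lambda>x. f x - g x) has_derivative (\<lambda>v. \<Sum>j\<in>UNIV. v $ j * c j)) (at x)"
    by (intro exI[of _ "\<lambda>j. cpartial f j x - cpartial g j x"])
       (simp add: sum_subtractf right_diff_distrib)
qed

lemma hol_fun_mult:
  assumes "hol_fun U f" and "hol_fun U g"
  shows "hol_fun U (\<lambda>x. f x * g x)"
proof (rule hol_funI)
  fix x assume "x \<in> U"
  from has_derivative_mult[OF hol_fun_has_derivative[OF assms(1) this]
      hol_fun_has_derivative[OF assms(2) this]]
  show "\<exists>c. ((\<lambda>x. f x * g x) has_derivative (\<lambda>v. \<Sum>j\<in>UNIV. v $ j * c j)) (at x)"
    by (intro exI[of _ "\<lambda>j. f x * cpartial g j x + cpartial f j x * g x"])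
       (simp add: sum.distrib distrib_left sum_distrib_left sum_distrib_right algebra_simps)
qed

lemma hol_fun_cmult: "hol_fun U f \<Longrightarrow> hol_fun U (\<lambda>x. c * f x)"
  using hol_fun_mult[OF hol_fun_const] .

lemma hol_fun_sum:
  assumes "finite A" and "\<And>a. a \<in> A \<Longrightarrow> hol_fun U (f a)"
  shows "hol_fun U (\<lambda>x. \<Sum>a\<in>A. f a x)"
  using assms by (induction A rule: finite_induct) (auto intro: hol_fun_add hol_fun_const)

lemma frechet_derivative_cong_open:
  assumes "open S" and "x \<in> S" and "\<And>y. y \<in> S \<Longrightarrow> f y = g y"
  shows "frechet_derivative f (at x) = frechet_derivative g (at x)"
proof -
  have "(f has_derivative D) (at x) \<longleftrightarrow> (g has_derivative D) (at x)" for D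
    using has_derivative_transform_within_open[OF _ assms(1,2)] assms(3) by (metis (lifting))
  then show ?thesis unfolding frechet_derivative_def by simp
qed

lemma jac_cong_open:
  "open S \<Longrightarrow> x \<in> S \<Longrightarrow> (\<And>y. y \<in> S \<Longrightarrow> F y = G y) \<Longrightarrow> jac F x = jac G x"
  unfolding jac_def using frechet_derivative_cong_open[of S x "\<lambda>y. F y $ _" "\<lambda>y. G y $ _"] by simp

lemma dmat_cong_open:
  "open S \<Longrightarrow> x \<in> S \<Longrightarrow> (\<And>y. y \<in> S \<Longrightarrow> M y = N y) \<Longrightarrow> dmat M x v = dmat N x v"
  unfolding dmat_def
  using frechet_derivative_cong_open[of S x "\<lambda>y. M y $ _ $ _" "\<lambda>y. N y $ _ $ _"] by simp

lemma hol_fun_cong_open: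
  assumes "hol_fun S f" and "open S" and "\<And>y. y \<in> S \<Longrightarrow> f y = g y"
  shows "hol_fun S g"
  unfolding hol_fun_def
proof
  fix x assume x: "x \<in> S"
  then obtain D where "(f has_derivative D) (at x)" and "\<forall>v. D (cvscale \<i> v) = \<i> * D v"
    using assms(1) unfolding hol_fun_def by blast
  moreover from this(1) have "(g has_derivative D) (at x)"
    by (rule has_derivative_transform_within_open[OF _ assms(2) x]) (use assms(3) in auto)
  ultimately show "\<exists>D. (g has_derivative D) (at x) \<and> (\<forall>v. D (cvscale \<i> v) = \<i> * D v)"
    by blast
qed

lemma has_derivative_vec_lambda:
  fixes F :: "'a::real_normed_vector \<Rightarrow> complex^'n"
  assumes "\<And>i. ((\<lambda>x. F x $ i) has_derivative F' i) (at x)"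
  shows "(F has_derivative (\<lambda>v. \<chi> i. F' i v)) (at x)"
proof -
  have "((\<lambda>x. F x \<bullet> b) has_derivative (\<lambda>v. (\<chi> i. F' i v) \<bullet> b)) (at x)" if "b \<in> Basis" for b
  proof -
    from that obtain i u where b: "b = axis i u" "u \<in> Basis" unfolding Basis_vec_def by auto
    have "((\<lambda>x. F x $ i \<bullet> u) has_derivative (\<lambda>v. F' i v \<bullet> u)) (at x)"
      using assms[of i] by (rule has_derivative_inner_left)
    then show ?thesis by (simp add: b inner_axis)
  qed
  then show ?thesis
    using has_derivative_componentwise_within[of F _ x UNIV] by simp
qed

lemma hol_map_has_derivative:
  assumes "hol_map U F" and "x \<in> U"
  shows "(F has_derivative (\<lambda>v. jac F x *v v)) (at x)"
proof -
  have "((\<lambda>x. F x $ i) has_derivative (\<lambda>v. \<Sum>j\<in>UNIV. v $ j * cpartial (\<lambda>y. F y $ i) j x)) (at x)"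
    for i
    using assms unfolding hol_map_def by (intro hol_fun_has_derivative) auto
  from has_derivative_vec_lambda[OF this] show ?thesis
    by (simp add: matrix_vector_mult_def jac_component mult.commute)
qed

lemma hol_map_continuous_on:
  fixes F :: "complex^'n \<Rightarrow> complex^'n"
  assumes "hol_map U F"
  shows "continuous_on U F"
  using hol_map_has_derivative[OF assms] has_derivative_continuous
  by (blast intro: continuous_at_imp_continuous_on)

lemma has_derivative_hol_compose:
  fixes G :: "complex^'n \<Rightarrow> complex^'n"
  assumes "hol_fun V f" and "hol_map U G" and "G x \<in> V" and "x \<in> U"
  shows "((\<lambda>x. f (G x)) has_derivative
           (\<lambda>v. \<Sum>l\<in>UNIV. v $ l * (\<Sum>i\<in>UNIV. cpartial f i (G x) * jac G x $ i $ l))) (at x)"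
proof -
  have "((\<lambda>x. f (G x)) has_derivative
          (\<lambda>v. \<Sum>i\<in>UNIV. (jac G x *v v) $ i * cpartial f i (G x))) (at x)"
    using has_derivative_compose[OF hol_map_has_derivative[OF assms(2,4)]
        hol_fun_has_derivative[OF assms(1,3)]] .
  moreover have "(\<Sum>i\<in>UNIV. (jac G x *v v) $ i * cpartial f i (G x))
      = (\<Sum>l\<in>UNIV. v $ l * (\<Sum>i\<in>UNIV. cpartial f i (G x) * jac G x $ i $ l))" for v
  proof -
    have "(\<Sum>i\<in>UNIV. (jac G x *v v) $ i * cpartial f i (G x))
        = (\<Sum>i\<in>UNIV. \<Sum>l\<in>UNIV. v $ l * (cpartial f i (G x) * jac G x $ i $ l))"
      by (simp add: matrix_vector_mult_def sum_distrib_left sum_distrib_right mult_ac)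
    also have "\<dots> = (\<Sum>l\<in>UNIV. \<Sum>i\<in>UNIV. v $ l * (cpartial f i (G x) * jac G x $ i $ l))"
      by (rule sum.swap)
    also have "\<dots> = (\<Sum>l\<in>UNIV. v $ l * (\<Sum>i\<in>UNIV. cpartial f i (G x) * jac G x $ i $ l))"
      by (simp add: sum_distrib_left)
    finally show ?thesis .
  qed
  ultimately show ?thesis by simp
qed

lemma hol_fun_compose:
  fixes G :: "complex^'n \<Rightarrow> complex^'n"
  assumes "hol_fun V f" and "hol_map U G" and "\<And>x. x \<in> U \<Longrightarrow> G x \<in> V"
  shows "hol_fun U (\<lambda>x. f (G x))"
proof (rule hol_funI)
  fix x assume "x \<in> U"
  from has_derivative_hol_compose[OF assms(1,2) assms(3)[OF this] this]
  show "\<exists>c. ((\<lambda>x. f (G x)) has_derivative (\<lambda>v. \<Sum>j\<in>UNIV. v $ j * c j)) (at x)"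
    by (rule exI[of _ "\<lambda>l. \<Sum>i\<in>UNIV. cpartial f i (G x) * jac G x $ i $ l"])
qed

lemma hol_map_compose:
  fixes F G :: "complex^'n \<Rightarrow> complex^'n"
  assumes "hol_map V F" and "hol_map U G" and "\<And>x. x \<in> U \<Longrightarrow> G x \<in> V"
  shows "hol_map U (\<lambda>x. F (G x))"
  using assms hol_fun_compose unfolding hol_map_def by blast

lemma jac_compose:
  fixes F G :: "complex^'n \<Rightarrow> complex^'n"
  assumes "hol_map V F" and "hol_map U G" and "G x \<in> V" and "x \<in> U"
  shows "jac (\<lambda>x. F (G x)) x = jac F (G x) ** jac G x"
proof -
  have "hol_fun V (\<lambda>y. F y $ i)" for i using assms(1) unfolding hol_map_def by blast
  from cpartial_eq[OF has_derivative_hol_compose[OF this assms(2-4)]] show ?thesis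
    by (simp add: vec_eq_iff matrix_matrix_mult_def jac_component)
qed

lemma jac_ident: "jac (\<lambda>x. x) (x :: complex^'n) = mat 1"
proof -
  have "((\<lambda>x. x $ i) has_derivative (\<lambda>v. \<Sum>j\<in>UNIV. v $ j * (if j = i then 1 else 0))) (at x)"
    for i :: 'n
    using bounded_linear_imp_has_derivative[OF bounded_linear_vec_nth[of i]]
    by (simp add: if_distrib[of "\<lambda>a. _ * a"] cong: if_cong)
  from cpartial_eq[OF this] show ?thesis
    by (simp add: vec_eq_iff jac_component mat_def)
qed

section \<open>Partial derivatives of holomorphic functions are holomorphic\<close>

lemma norm_axis: "norm (axis j (c::complex)) = norm c"
  by (simp add: norm_eq_sqrt_inner inner_axis_axis)

lemma bounded_linear_axis: "bounded_linear (axis j :: complex \<Rightarrow> complex^'n)"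
  by (rule bounded_linear_intro[of _ 1])
     (simp_all add: axis_def vec_eq_iff norm_axis[unfolded axis_def])

lemma continuous_on_axis [continuous_intros]:
  "continuous_on S g \<Longrightarrow> continuous_on S (\<lambda>p. axis j (g p) :: complex^'n)"
  using continuous_on_compose2[OF linear_continuous_on[OF bounded_linear_axis], of S g UNIV]
  by auto

lemma cpartial_has_field_derivative:
  assumes "hol_fun U f" and "y + axis j u \<in> U"
  shows "((\<lambda>u. f (y + axis j u)) has_field_derivative cpartial f j (y + axis j u)) (at u)"
proof -
  have "((\<lambda>u. y + axis j u) has_derivative axis j) (at u)"
    using bounded_linear_imp_has_derivative[OF bounded_linear_axis]
    by (auto intro!: derivative_eq_intros)
  from has_derivative_compose[OF this hol_fun_has_derivative[OF assms]]
  have "((\<lambda>u. f (y + axis j u)) has_derivative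
          (\<lambda>s. \<Sum>l\<in>UNIV. axis j s $ l * cpartial f l (y + axis j u))) (at u)" .
  moreover have "(\<lambda>s. \<Sum>l\<in>UNIV. axis j s $ l * cpartial f l (y + axis j u))
      = (*) (cpartial f j (y + axis j u))"
    by (rule ext) (simp add: axis_def if_distrib[of "\<lambda>a. a * _"] cong: if_cong)
  ultimately show ?thesis unfolding has_field_derivative_def by simp
qed

lemma add_axis_in_cball:
  fixes x y :: "complex^'n"
  assumes "cball x (2 * r) \<subseteq> U" and "y \<in> ball x r" and "norm u \<le> r"
  shows "y + axis j u \<in> U"
proof -
  have "dist x (y + axis j u) = norm ((x - y) - axis j u)"
    by (simp add: dist_norm algebra_simps)
  also have "\<dots> \<le> dist x y + norm (axis j u)"
    by (metis dist_norm norm_triangle_ineq4)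
  also have "\<dots> \<le> 2 * r" using assms(2,3) by (simp add: norm_axis)
  finally show ?thesis using assms(1) by auto
qed

definition cauchy_kernel :: "real \<Rightarrow> real \<Rightarrow> complex" where
  "cauchy_kernel r t = vector_derivative (circlepath 0 r) (at t) / (circlepath 0 r t)^2"

lemma continuous_on_cauchy_kernel [continuous_intros]:
  "r > 0 \<Longrightarrow> continuous_on S g \<Longrightarrow> continuous_on S (\<lambda>p. cauchy_kernel r (g p))"
  unfolding cauchy_kernel_def vector_derivative_circlepath unfolding circlepath
  by (intro continuous_intros) auto

text \<open>Cauchy's formula for the derivative at \<open>0\<close> of the one-variable function
  \<open>u \<mapsto> f (y + axis j u)\<close>.\<close>

lemma cpartial_eq_cauchy_integral:
  fixes f :: "complex^'n \<Rightarrow> complex"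
  assumes f: "hol_fun U f" and r: "r > 0" and sub: "cball x (2 * r) \<subseteq> U"
    and y: "y \<in> ball x r"
  shows "cpartial f j y = 1 / (2 * of_real pi * \<i>) *
           integral (cbox 0 1) (\<lambda>t. f (y + axis j (circlepath 0 r t)) * cauchy_kernel r t)"
proof -
  define h where "h = (\<lambda>u. f (y + axis j u))"
  have h': "(h has_field_derivative cpartial f j (y + axis j u)) (at u)" if "u \<in> cball 0 r" for u
    unfolding h_def
    by (rule cpartial_has_field_derivative[OF f add_axis_in_cball[OF sub y]]) (use that in simp)
  have "continuous_on (cball 0 r) h"
    using h' by (blast intro: continuous_at_imp_continuous_on DERIV_continuous)
  moreover have "h holomorphic_on ball 0 r"
    using h' by (meson field_differentiable_at_within field_differentiable_def
        holomorphic_onI mem_ball_imp_mem_cball)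
  ultimately have "(h has_field_derivative
      1 / (2 * of_real pi * \<i>) * contour_integral (circlepath 0 r) (\<lambda>u. h u / (u - 0)^2)) (at 0)"
    using Cauchy_derivative_integral_circlepath(2)[of 0 r h 0] r by simp
  moreover have "(h has_field_derivative cpartial f j y) (at 0)"
  proof -
    have "axis j 0 = (0 :: complex^'n)" by (simp add: axis_def vec_eq_iff)
    with h'[of 0] r show ?thesis by simp
  qed
  ultimately have "cpartial f j y
      = 1 / (2 * of_real pi * \<i>) * contour_integral (circlepath 0 r) (\<lambda>u. h u / (u - 0)^2)"
    using DERIV_unique by metis
  then show ?thesis
    by (simp add: contour_integral_integral h_def cauchy_kernel_def cbox_interval)
qed

lemma continuous_on_circle_shift:
  fixes g :: "complex^'n \<Rightarrow> 'b::topological_space"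
  assumes "continuous_on U g" and "r > 0" and "cball x (2 * r) \<subseteq> U"
  shows "continuous_on (ball x r \<times> cbox 0 1) (\<lambda>p. g (fst p + axis j (circlepath 0 r (snd p))))"
proof (rule continuous_on_compose2[OF assms(1)])
  show "continuous_on (ball x r \<times> cbox 0 1) (\<lambda>p. fst p + axis j (circlepath 0 r (snd p)))"
    unfolding circlepath by (intro continuous_intros)
  show "(\<lambda>p. fst p + axis j (circlepath 0 r (snd p))) ` (ball x r \<times> cbox 0 1) \<subseteq> U"
    using add_axis_in_cball[OF assms(3)] assms(2) by (auto simp: circlepath norm_mult)
qed

lemma continuous_on_cpartial:
  fixes f :: "complex^'n \<Rightarrow> complex"
  assumes U: "open U" and f: "hol_fun U f"
  shows "continuous_on U (cpartial f j)"
proof (rule continuous_at_imp_continuous_on, rule ballI)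
  fix x assume "x \<in> U"
  then obtain e where e: "e > 0" "cball x e \<subseteq> U" using U open_contains_cball by blast
  define r where "r = e / 2"
  have r: "r > 0" and sub: "cball x (2 * r) \<subseteq> U" using e by (auto simp: r_def)
  have "continuous_on (ball x r \<times> cbox 0 1)
      (\<lambda>p. f (fst p + axis j (circlepath 0 r (snd p))) * cauchy_kernel r (snd p))"
    using continuous_on_circle_shift[OF hol_fun_continuous_on[OF f] r sub] r
    by (intro continuous_intros)
  then have "continuous_on (ball x r) (\<lambda>y. 1 / (2 * of_real pi * \<i>) *
      integral (cbox 0 1) (\<lambda>t. f (y + axis j (circlepath 0 r t)) * cauchy_kernel r t))"
    by (intro continuous_on_mult continuous_on_const integral_continuous_on_param)
       (simp add: case_prod_beta')
  then have "continuous_on (ball x r) (cpartial f j)"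
    by (rule continuous_on_eq) (use cpartial_eq_cauchy_integral[OF f r sub] in auto)
  then show "isCont (cpartial f j) x"
    using continuous_on_eq_continuous_at[OF open_ball] r by (metis centre_in_ball)
qed

lemma has_derivative_cauchy_integral:
  fixes f :: "complex^'n \<Rightarrow> complex"
  assumes U: "open U" and f: "hol_fun U f" and r: "r > 0" and sub: "cball x (2 * r) \<subseteq> U"
  shows "((\<lambda>y. integral (cbox 0 1) (\<lambda>t. f (y + axis j (circlepath 0 r t)) * cauchy_kernel r t))
           has_derivative (\<lambda>v. integral (cbox 0 1) (\<lambda>t.
             (\<Sum>l\<in>UNIV. v $ l * cpartial f l (x + axis j (circlepath 0 r t))) * cauchy_kernel r t)))
         (at x)"
proof -
  define c where "c = (\<lambda>t. axis j (circlepath 0 r t) :: complex^'n)"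
  define K where "K = (\<lambda>y t. f (y + c t) * cauchy_kernel r t)"
  define K' where "K' = (\<lambda>y t. Blinfun (\<lambda>v::complex^'n.
                      (\<Sum>l\<in>UNIV. v $ l * cpartial f l (y + c t)) * cauchy_kernel r t))"
  have K'_apply: "blinfun_apply (K' y t) v
      = (\<Sum>l\<in>UNIV. v $ l * cpartial f l (y + c t)) * cauchy_kernel r t" for y t v
    unfolding K'_def
    by (subst bounded_linear_Blinfun_apply)
       (auto intro!: bounded_linear_intros bounded_linear_mult_left bounded_linear_vec_nth)
  have inU: "y + c t \<in> U" if "y \<in> ball x r" for y t
    unfolding c_def using add_axis_in_cball[OF sub that] r by (simp add: circlepath norm_mult)
  have "((\<lambda>y. K y t) has_derivative blinfun_apply (K' y t)) (at y within ball x r)"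
    if "y \<in> ball x r" for y t
  proof -
    have "((\<lambda>y. y + c t) has_derivative (\<lambda>v. v)) (at y)"
      by (auto intro!: derivative_eq_intros)
    from has_derivative_compose[OF this hol_fun_has_derivative[OF f inU[OF that]]]
    have "((\<lambda>y. K y t) has_derivative blinfun_apply (K' y t)) (at y)"
      unfolding K_def K'_apply fun_eq_iff[symmetric] by (rule has_derivative_mult_left)
    then show ?thesis by (rule has_derivative_at_withinI)
  qed
  moreover have "K y integrable_on cbox 0 1" if "y \<in> ball x r" for y
  proof -
    have "continuous_on (cbox 0 1) (\<lambda>t. f (y + c t))"
      by (rule continuous_on_compose2[OF hol_fun_continuous_on[OF f]])
         (use inU[OF that] in \<open>auto simp: c_def circlepath intro!: continuous_intros\<close>)
    then show ?thesis
      unfolding K_def using r by (intro integrable_continuous continuous_intros)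
  qed
  moreover have cK': "continuous_on (ball x r \<times> cbox 0 1) (\<lambda>(y, t). K' y t)"
    unfolding case_prod_beta'
  proof (rule continuous_on_blinfun_componentwise)
    fix b :: "complex^'n"
    show "continuous_on (ball x r \<times> cbox 0 1) (\<lambda>p. blinfun_apply (K' (fst p) (snd p)) b)"
      unfolding K'_apply c_def
      using continuous_on_circle_shift[OF continuous_on_cpartial[OF U f] r sub] r
      by (intro continuous_intros)
  qed
  ultimately have "((\<lambda>y. integral (cbox 0 1) (K y)) has_derivative
      blinfun_apply (integral (cbox 0 1) (K' x))) (at x within ball x r)"
    using r by (intro leibniz_rule) auto
  then have "((\<lambda>y. integral (cbox 0 1) (K y)) has_derivative
      blinfun_apply (integral (cbox 0 1) (K' x))) (at x)"
    using r at_within_open[of x "ball x r"] by simp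
  moreover have "K' x integrable_on cbox 0 1"
    using r by (intro integrable_continuous continuous_on_compose2[OF cK'[unfolded case_prod_beta'],
          of _ "\<lambda>t. (x, t)", simplified]) (auto intro!: continuous_intros)
  then have "blinfun_apply (integral (cbox 0 1) (K' x)) = (\<lambda>v. integral (cbox 0 1) (\<lambda>t.
      (\<Sum>l\<in>UNIV. v $ l * cpartial f l (x + axis j (circlepath 0 r t))) * cauchy_kernel r t))"
    by (simp add: fun_eq_iff blinfun_apply_integral K'_apply c_def)
  ultimately show ?thesis by (simp add: K_def c_def)
qed

text \<open>The derivative of the integrand in Cauchy's formula is complex-linear for every \<open>t\<close>,
  hence so is its integral.\<close>

lemma hol_fun_cpartial:
  fixes f :: "complex^'n \<Rightarrow> complex"
  assumes U: "open U" and f: "hol_fun U f"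
  shows "hol_fun U (cpartial f j)"
  unfolding hol_fun_def
proof
  fix x assume "x \<in> U"
  then obtain e where e: "e > 0" "cball x e \<subseteq> U" using U open_contains_cball by blast
  define r where "r = e / 2"
  have r: "r > 0" and sub: "cball x (2 * r) \<subseteq> U" using e by (auto simp: r_def)
  define g where "g = (\<lambda>v t. (\<Sum>l\<in>UNIV. v $ l * cpartial f l (x + axis j (circlepath 0 r t)))
                              * cauchy_kernel r t)"
  define D where "D = (\<lambda>v. 1 / (2 * of_real pi * \<i>) * integral (cbox 0 1) (g v))"
  have "(cpartial f j has_derivative D) (at x)"
    unfolding D_def g_def
    using has_derivative_mult_right[OF has_derivative_cauchy_integral[OF U f r sub]]
    by (rule has_derivative_transform_within_open[where s = "ball x r"])
       (use r cpartial_eq_cauchy_integral[OF f r sub] in auto)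
  moreover have "D (cvscale \<i> v) = \<i> * D v" for v
  proof -
    have "g (cvscale \<i> v) = (\<lambda>t. \<i> * g v t)"
      by (simp add: g_def cvscale_def fun_eq_iff sum_distrib_left mult_ac)
    then show ?thesis by (simp add: D_def)
  qed
  ultimately show "\<exists>D. (cpartial f j has_derivative D) (at x) \<and> (\<forall>v. D (cvscale \<i> v) = \<i> * D v)"
    by blast
qed

definition hol_mat :: "(complex^'n) set \<Rightarrow> (complex^'n \<Rightarrow> complex^'m^'k) \<Rightarrow> bool" where
  "hol_mat U M \<longleftrightarrow> (\<forall>i j. hol_fun U (\<lambda>x. M x $ i $ j))"

lemma hol_mat_jac:
  fixes F :: "complex^'n \<Rightarrow> complex^'n"
  assumes "open U" and "hol_map U F"
  shows "hol_mat U (jac F)"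
  using assms hol_fun_cpartial unfolding hol_mat_def hol_map_def jac_component by blast

lemma hol_mat_mult:
  assumes "hol_mat U A" and "hol_mat U B"
  shows "hol_mat U (\<lambda>x. A x ** B x)"
  using assms unfolding hol_mat_def matrix_matrix_mult_def
  by (simp add: hol_fun_sum hol_fun_mult)

lemma hol_mat_diff:
  assumes "hol_mat U A" and "hol_mat U B"
  shows "hol_mat U (\<lambda>x. A x - B x)"
  using assms unfolding hol_mat_def by (simp add: hol_fun_diff)

lemma hol_mat_compose:
  fixes F :: "complex^'n \<Rightarrow> complex^'n"
  assumes "hol_mat V A" and "hol_map U F" and "\<And>x. x \<in> U \<Longrightarrow> F x \<in> V"
  shows "hol_mat U (\<lambda>x. A (F x))"
  using assms hol_fun_compose unfolding hol_mat_def by blast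

lemma hol_mat_cong_open:
  assumes "hol_mat U A" and "open U" and "\<And>x. x \<in> U \<Longrightarrow> A x = B x"
  shows "hol_mat U B"
  unfolding hol_mat_def
proof (intro allI)
  fix i j
  show "hol_fun U (\<lambda>x. B x $ i $ j)"
  proof (rule hol_fun_cong_open[OF _ assms(2)])
    show "hol_fun U (\<lambda>x. A x $ i $ j)" using assms(1) unfolding hol_mat_def by blast
  qed (simp add: assms(3))
qed

lemma dmat_eq_cpartial:
  assumes "hol_mat U M" and "x \<in> U"
  shows "dmat M x v = (\<chi> i j. \<Sum>l\<in>UNIV. v $ l * cpartial (\<lambda>y. M y $ i $ j) l x)"
proof -
  have "frechet_derivative (\<lambda>y. M y $ i $ j) (at x)
      = (\<lambda>v. \<Sum>l\<in>UNIV. v $ l * cpartial (\<lambda>y. M y $ i $ j) l x)" for i j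
    using assms unfolding hol_mat_def
    by (intro frechet_derivative_at[symmetric] hol_fun_has_derivative) auto
  then show ?thesis by (simp add: dmat_def)
qed

lemma dmat_add:
  "hol_mat U M \<Longrightarrow> x \<in> U \<Longrightarrow> dmat M x (v + w) = dmat M x v + dmat M x w"
  by (simp add: dmat_eq_cpartial vec_eq_iff sum.distrib algebra_simps)

lemma dmat_cvscale:
  "hol_mat U M \<Longrightarrow> x \<in> U \<Longrightarrow> dmat M x (cvscale c v) = cmscale c (dmat M x v)"
  by (simp add: dmat_eq_cpartial cmscale_def cvscale_def vec_eq_iff sum_distrib_left mult.assoc)

lemma dmat_mult:
  assumes A: "hol_mat U A" and B: "hol_mat U B" and x: "x \<in> U"
  shows "dmat (\<lambda>x. A x ** B x) x v = dmat A x v ** B x + A x ** dmat B x v"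
proof -
  have fd: "(g has_derivative frechet_derivative g (at x)) (at x)" if "hol_fun U g" for g
    using that x unfolding hol_fun_def by (meson differentiableI frechet_derivative_works)
  have "((\<lambda>y. \<Sum>l\<in>UNIV. A y $ i $ l * B y $ l $ j) has_derivative
      (\<lambda>v. \<Sum>l\<in>UNIV. A x $ i $ l * frechet_derivative (\<lambda>y. B y $ l $ j) (at x) v
                   + frechet_derivative (\<lambda>y. A y $ i $ l) (at x) v * B x $ l $ j)) (at x)" for i j
    using A B unfolding hol_mat_def by (intro has_derivative_sum has_derivative_mult fd) auto
  from frechet_derivative_at[OF this, symmetric] show ?thesis
    by (simp add: dmat_def vec_eq_iff matrix_matrix_mult_def sum.distrib add.commute)
qed

lemma dmat_compose:
  fixes F :: "complex^'n \<Rightarrow> complex^'n"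
  assumes "hol_mat V A" and "hol_map U F" and "F x \<in> V" and "x \<in> U"
  shows "dmat (\<lambda>x. A (F x)) x v = dmat A (F x) (jac F x *v v)"
proof -
  have "frechet_derivative (\<lambda>y. A (F y) $ i $ j) (at x)
      = (\<lambda>v. frechet_derivative (\<lambda>y. A y $ i $ j) (at (F x)) (jac F x *v v))" for i j
  proof -
    have "hol_fun V (\<lambda>y. A y $ i $ j)" using assms(1) unfolding hol_mat_def by blast
    then have "((\<lambda>y. A y $ i $ j) has_derivative frechet_derivative (\<lambda>y. A y $ i $ j) (at (F x)))
        (at (F x))"
      using assms(3) unfolding hol_fun_def by (meson differentiableI frechet_derivative_works)
    from has_derivative_compose[OF hol_map_has_derivative[OF assms(2,4)] this]
    show ?thesis by (simp add: frechet_derivative_at[symmetric])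
  qed
  then show ?thesis by (simp add: dmat_def)
qed

section \<open>The forms theta and sharp along maps with invertible Jacobian\<close>

lemma theta_cong_open:
  assumes "open S" and "x \<in> S" and "\<And>y. y \<in> S \<Longrightarrow> F y = G y"
  shows "theta F x v = theta G x v"
proof -
  have "jac F y = jac G y" if "y \<in> S" for y by (rule jac_cong_open[OF assms(1) that assms(3)])
  moreover from this have "dmat (jac F) x v = dmat (jac G) x v"
    by (rule dmat_cong_open[OF assms(1,2)])
  ultimately show ?thesis unfolding theta_def using assms(2) by simp
qed

lemma sharp_cong_open:
  assumes "open S" and "x \<in> S" and "\<And>y. y \<in> S \<Longrightarrow> F y = G y"
    and "\<And>w. \<Theta> (F x) w = \<Theta>' (F x) w"
  shows "sharp F \<Theta> x v = sharp G \<Theta>' x v"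
  unfolding sharp_def using jac_cong_open[OF assms(1-3)] assms(2-4) by simp

lemma matrix_cmscale_right: "(A::complex^'n^'n) ** cmscale c B = cmscale c (A ** B)"
  by (simp add: vec_eq_iff matrix_matrix_mult_def cmscale_def sum_distrib_left mult_ac)

lemma cmscale_diff: "cmscale c (A - B) = cmscale c A - cmscale c (B::complex^'n^'n)"
  by (simp add: cmscale_def vec_eq_iff algebra_simps)

lemma minv_eq:
  fixes A B :: "complex^'n^'n"
  assumes "A ** B = mat 1"
  shows "minv A = B"
proof -
  have "B ** A = mat 1" using assms by (rule matrix_left_right_inverse1)
  with assms have "\<exists>B. A ** B = mat 1 \<and> B ** A = mat 1" by blast
  from someI_ex[OF this] obtain C where C: "A ** C = mat 1" "C ** A = mat 1" "minv A = C"
    unfolding minv_def by blast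
  have "C = C ** (A ** B)" by (simp add: assms)
  also have "\<dots> = B" by (simp add: matrix_mul_assoc C(2))
  finally show ?thesis using C(3) by simp
qed

lemma invertible_minv:
  fixes A :: "complex^'n^'n"
  assumes "invertible A"
  shows "A ** minv A = mat 1" and "minv A ** A = mat 1"
proof -
  obtain B where AB: "A ** B = mat 1" using assms unfolding invertible_def by blast
  then have "minv A = B" by (rule minv_eq)
  with AB show "A ** minv A = mat 1" by simp
  then show "minv A ** A = mat 1" by (rule matrix_left_right_inverse1)
qed

lemma minv_mult:
  fixes A B :: "complex^'n^'n"
  assumes "invertible A" and "invertible B"
  shows "minv (A ** B) = minv B ** minv A"
proof (rule minv_eq)
  have "A ** B ** (minv B ** minv A) = A ** (B ** minv B) ** minv A"
    by (simp add: matrix_mul_assoc)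
  then show "A ** B ** (minv B ** minv A) = mat 1"
    by (simp add: invertible_minv assms)
qed

definition hol_regular :: "(complex^'n) set \<Rightarrow> (complex^'n \<Rightarrow> complex^'n) \<Rightarrow> bool" where
  "hol_regular U F \<longleftrightarrow> open U \<and> hol_map U F \<and> (\<forall>x\<in>U. invertible (jac F x))"

lemma hol_regular_compose:
  assumes F: "hol_regular U F" and G: "hol_regular V G" and FUV: "F ` U \<subseteq> V"
  shows "hol_regular U (G \<circ> F)"
  unfolding hol_regular_def
proof (intro conjI ballI)
  have hF: "hol_map U F" and hG: "hol_map V G" using F G unfolding hol_regular_def by auto
  show "open U" using F unfolding hol_regular_def by blast
  show "hol_map U (G \<circ> F)"
    using hol_map_compose[OF hG hF] FUV unfolding o_def by blast
  fix x assume x: "x \<in> U"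
  then have "jac (G \<circ> F) x = jac G (F x) ** jac F x"
    using jac_compose[OF hG hF] FUV unfolding o_def by blast
  moreover have "invertible (jac G (F x))" and "invertible (jac F x)"
    using F G FUV x unfolding hol_regular_def by auto
  ultimately show "invertible (jac (G \<circ> F) x)" by (simp add: invertible_mult)
qed

lemma sharp_compose:
  assumes F: "hol_regular U F" and G: "hol_regular V G" and FUV: "F ` U \<subseteq> V" and x: "x \<in> U"
  shows "sharp (G \<circ> F) \<Theta> x v = sharp F (sharp G \<Theta>) x v"
proof -
  define A where "A = jac F x"
  define B where "B = jac G (F x)"
  have inv: "invertible A" "invertible B"
    using F G FUV x unfolding hol_regular_def A_def B_def by auto
  have JGF: "jac (G \<circ> F) x = B ** A"
    using F G FUV x jac_compose unfolding hol_regular_def A_def B_def o_def by blast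
  show ?thesis
    unfolding sharp_def JGF A_def[symmetric] B_def[symmetric] minv_mult[OF inv(2,1)]
    by (simp add: matrix_mul_assoc matrix_vector_mul_assoc)
qed

lemma theta_compose:
  assumes F: "hol_regular U F" and G: "hol_regular V G" and FUV: "F ` U \<subseteq> V" and x: "x \<in> U"
  shows "theta (G \<circ> F) x v = sharp F (theta G) x v + theta F x v"
proof -
  define A where "A = jac F x"
  define B where "B = jac G (F x)"
  have U: "open U" and V: "open V" and hF: "hol_map U F" and hG: "hol_map V G"
    using F G unfolding hol_regular_def by auto
  have inv: "invertible A" "invertible B"
    using F G FUV x unfolding hol_regular_def A_def B_def by auto
  have J: "jac (G \<circ> F) y = jac G (F y) ** jac F y" if "y \<in> U" for y
    using jac_compose[OF hG hF] FUV that unfolding o_def by blast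
  have "dmat (jac (G \<circ> F)) x v = dmat (\<lambda>y. jac G (F y) ** jac F y) x v"
    by (rule dmat_cong_open[OF U x J])
  also have "\<dots> = dmat (\<lambda>y. jac G (F y)) x v ** A + B ** dmat (jac F) x v"
    using hol_mat_compose[OF hol_mat_jac[OF V hG] hF] hol_mat_jac[OF U hF] FUV x
    unfolding A_def B_def by (intro dmat_mult) auto
  also have "dmat (\<lambda>y. jac G (F y)) x v = dmat (jac G) (F x) (A *v v)"
    using dmat_compose[OF hol_mat_jac[OF V hG] hF] FUV x unfolding A_def by blast
  finally have dJ: "dmat (jac (G \<circ> F)) x v = dmat (jac G) (F x) (A *v v) ** A + B ** dmat (jac F) x v" .
  have "theta (G \<circ> F) x v
      = minv A ** (minv B ** dmat (jac G) (F x) (A *v v)) ** A + minv A ** (minv B ** B) ** dmat (jac F) x v"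
    unfolding theta_def J[OF x] dJ A_def[symmetric] B_def[symmetric] minv_mult[OF inv(2,1)]
    by (simp add: matrix_add_ldistrib matrix_mul_assoc)
  also have "\<dots> = sharp F (theta G) x v + theta F x v"
    unfolding sharp_def theta_def A_def[symmetric] B_def[symmetric] invertible_minv(2)[OF inv(2)]
    by simp
  finally show ?thesis .
qed

lemma chartD:
  assumes "chart U \<sigma>"
  shows "open U" and "open (\<sigma> ` U)" and "hol_map U \<sigma>" and "hol_map (\<sigma> ` U) (inv_into U \<sigma>)"
    and "inj_on \<sigma> U"
  using assms unfolding chart_def biholo_def by auto

lemma jac_inv_into_chart:
  assumes c: "chart U \<sigma>" and x: "x \<in> U"
  shows "jac (inv_into U \<sigma>) (\<sigma> x) ** jac \<sigma> x = mat 1"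
proof -
  have "jac (inv_into U \<sigma>) (\<sigma> x) ** jac \<sigma> x = jac (\<lambda>y. inv_into U \<sigma> (\<sigma> y)) x"
    by (rule jac_compose[OF chartD(4,3)[OF c], symmetric]) (use x in auto)
  also have "\<dots> = jac (\<lambda>y. y) x"
    by (rule jac_cong_open[OF chartD(1)[OF c] x]) (simp add: inv_into_f_f[OF chartD(5)[OF c]])
  finally show ?thesis by (simp add: jac_ident)
qed

lemma minv_jac_chart:
  assumes "chart U \<sigma>" and "x \<in> U"
  shows "minv (jac \<sigma> x) = jac (inv_into U \<sigma>) (\<sigma> x)"
  using jac_inv_into_chart[OF assms] by (rule minv_eq[OF matrix_left_right_inverse1])

lemma hol_regular_chart:
  assumes c: "chart U \<sigma>"
  shows "hol_regular U \<sigma>"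
  unfolding hol_regular_def
proof (intro conjI ballI)
  show "open U" and "hol_map U \<sigma>" using chartD[OF c] by auto
  fix x assume "x \<in> U"
  from jac_inv_into_chart[OF c this] show "invertible (jac \<sigma> x)"
    unfolding invertible_left_inverse by blast
qed

lemma hol_regular_inv_into_chart:
  assumes c: "chart U \<sigma>"
  shows "hol_regular (\<sigma> ` U) (inv_into U \<sigma>)"
  unfolding hol_regular_def
proof (intro conjI ballI)
  show "open (\<sigma> ` U)" and "hol_map (\<sigma> ` U) (inv_into U \<sigma>)" using chartD[OF c] by auto
  fix y assume "y \<in> \<sigma> ` U"
  then obtain x where "x \<in> U" and "y = \<sigma> x" by blast
  from jac_inv_into_chart[OF c this(1)] this(2) show "invertible (jac (inv_into U \<sigma>) y)"
    unfolding invertible_right_inverse by blast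
qed

lemma hol_mat_minv_jac_chart:
  assumes c: "chart U \<sigma>"
  shows "hol_mat U (\<lambda>x. minv (jac \<sigma> x))"
proof (rule hol_mat_cong_open[OF _ chartD(1)[OF c]])
  show "hol_mat U (\<lambda>x. jac (inv_into U \<sigma>) (\<sigma> x))"
    using hol_mat_compose[OF hol_mat_jac[OF chartD(2,4)[OF c]] chartD(3)[OF c]] by blast
qed (simp add: minv_jac_chart[OF c])

lemma hol_regular_transition:
  assumes "chart U \<sigma>p" and "chart U \<sigma>q"
  shows "hol_regular (\<sigma>q ` U) (\<sigma>p \<circ> inv_into U \<sigma>q)"
  using hol_regular_compose[OF hol_regular_inv_into_chart[OF assms(2)] hol_regular_chart[OF assms(1)]]
  by (auto intro: inv_into_into)

lemma sharp_theta_transition: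
  assumes cp: "chart U \<sigma>p" and cq: "chart U \<sigma>q" and x: "x \<in> U"
  shows "sharp \<sigma>q (theta (\<sigma>p \<circ> inv_into U \<sigma>q)) x v = theta \<sigma>p x v - theta \<sigma>q x v"
proof -
  have "theta \<sigma>p x v = theta ((\<sigma>p \<circ> inv_into U \<sigma>q) \<circ> \<sigma>q) x v"
    by (rule theta_cong_open[OF chartD(1)[OF cq] x]) (simp add: inv_into_f_f[OF chartD(5)[OF cq]])
  also have "\<dots> = sharp \<sigma>q (theta (\<sigma>p \<circ> inv_into U \<sigma>q)) x v + theta \<sigma>q x v"
    by (rule theta_compose[OF hol_regular_chart[OF cq] hol_regular_transition[OF cp cq] _ x]) auto
  finally show ?thesis by simp
qed

lemma sharp_sharp_transition:
  assumes cr: "chart U \<sigma>r" and ck: "chart U \<sigma>k" and x: "x \<in> U"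
  shows "sharp \<sigma>k (sharp (\<sigma>r \<circ> inv_into U \<sigma>k) \<Theta>) x v = sharp \<sigma>r \<Theta> x v"
proof -
  have "sharp \<sigma>k (sharp (\<sigma>r \<circ> inv_into U \<sigma>k) \<Theta>) x v = sharp ((\<sigma>r \<circ> inv_into U \<sigma>k) \<circ> \<sigma>k) \<Theta> x v"
    by (rule sharp_compose[OF hol_regular_chart[OF ck] hol_regular_transition[OF cr ck] _ x,
          symmetric]) auto
  also have "\<dots> = sharp \<sigma>r \<Theta> x v"
    by (rule sharp_cong_open[OF chartD(1)[OF ck] x]) (simp_all add: inv_into_f_f[OF chartD(5)[OF ck]])
  finally show ?thesis .
qed

lemma hol_mat_theta_chart:
  fixes \<sigma> :: "complex^'n \<Rightarrow> complex^'n"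
  assumes c: "chart U \<sigma>"
  shows "hol_mat U (\<lambda>x. theta \<sigma> x w)"
proof -
  have J: "hol_mat U (jac \<sigma>)" by (rule hol_mat_jac[OF chartD(1,3)[OF c]])
  have "hol_mat U (\<lambda>x. (\<chi> i j. \<Sum>l\<in>UNIV. w $ l * cpartial (\<lambda>y. jac \<sigma> y $ i $ j) l x) :: complex^'n^'n)"
    using J chartD(1)[OF c] unfolding hol_mat_def
    by (auto intro!: hol_fun_sum hol_fun_cmult hol_fun_cpartial)
  from hol_mat_mult[OF hol_mat_minv_jac_chart[OF c] this] show ?thesis
    by (rule hol_mat_cong_open[OF _ chartD(1)[OF c]]) (simp add: theta_def dmat_eq_cpartial[OF J])
qed

lemma theta_chart_add:
  assumes "chart U \<sigma>" and "x \<in> U"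
  shows "theta \<sigma> x (a + b) = theta \<sigma> x a + theta \<sigma> x b"
  using dmat_add[OF hol_mat_jac[OF chartD(1,3)[OF assms(1)]] assms(2)]
  by (simp add: theta_def matrix_add_ldistrib)

lemma theta_chart_cvscale:
  assumes "chart U \<sigma>" and "x \<in> U"
  shows "theta \<sigma> x (cvscale c a) = cmscale c (theta \<sigma> x a)"
  using dmat_cvscale[OF hol_mat_jac[OF chartD(1,3)[OF assms(1)]] assms(2)]
  by (simp add: theta_def matrix_cmscale_right)

section \<open>Multilinear forms and their alternating products\<close>

lemma multilin_cong:
  assumes "multilin scl k F" and "\<And>r. r < k \<Longrightarrow> v r = w r"
  shows "F v = F w"
  using assms unfolding multilin_def by blast

lemma multilin_update_add:
  "multilin scl k F \<Longrightarrow> r < k \<Longrightarrow> F (v(r := a + b)) = F (v(r := a)) + F (v(r := b))"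
  unfolding multilin_def by blast

lemma multilin_update_scale:
  "multilin scl k F \<Longrightarrow> r < k \<Longrightarrow> F (v(r := scl c a)) = c * F (v(r := a))"
  unfolding multilin_def by blast

lemma multilin_zero_slot:
  assumes "multilin cmscale k T" and "r < k" and "v r = 0"
  shows "T v = 0"
proof -
  have "cmscale 0 (0 :: complex^'n^'n) = 0" by (simp add: cmscale_def vec_eq_iff)
  with assms(3) have "v(r := cmscale 0 0) = v" by auto
  then have "T v = T (v(r := cmscale 0 0))" by simp
  also have "\<dots> = 0" by (simp add: multilin_update_scale[OF assms(1,2)])
  finally show ?thesis .
qed

lemma multilin_update_sum:
  assumes "multilin cmscale k T" and "r < k" and "finite A"
  shows "T (v(r := \<Sum>a\<in>A. M a)) = (\<Sum>a\<in>A. T (v(r := M a)))"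
  using assms(3)
proof (induction A rule: finite_induct)
  case empty
  show ?case using multilin_zero_slot[OF assms(1,2)] by simp
next
  case (insert a A)
  have "T (v(r := \<Sum>a\<in>insert a A. M a)) = T (v(r := M a + (\<Sum>a\<in>A. M a)))"
    using insert.hyps by simp
  also have "\<dots> = T (v(r := M a)) + (\<Sum>a\<in>A. T (v(r := M a)))"
    by (simp only: multilin_update_add[OF assms(1,2)] insert.IH)
  also have "\<dots> = (\<Sum>a\<in>insert a A. T (v(r := M a)))"
    using insert.hyps by simp
  finally show ?case .
qed

definition mat_unit :: "'n \<Rightarrow> 'n \<Rightarrow> complex^'n^'n" where
  "mat_unit i j = (\<chi> a b. if a = i \<and> b = j then 1 else 0)"

lemma sum_mat_unit:
  fixes M :: "complex^'n^'n"
  shows "(\<Sum>i\<in>UNIV. \<Sum>j\<in>UNIV. cmscale (M $ i $ j) (mat_unit i j)) = M"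
proof -
  have "(\<Sum>j\<in>UNIV. M $ i $ j * (if a = i \<and> b = j then 1 else 0)) = (if a = i then M $ i $ b else 0)"
    for a b i
    by (cases "a = i") (auto simp: if_distrib[of "\<lambda>x. _ * x"] cong: if_cong)
  then show ?thesis by (simp add: vec_eq_iff cmscale_def mat_unit_def)
qed

lemma multilin_update_expand:
  assumes "multilin cmscale k T" and "r < k"
  shows "T (v(r := M)) = (\<Sum>i\<in>UNIV. \<Sum>j\<in>UNIV. M $ i $ j * T (v(r := mat_unit i j)))"
  by (subst sum_mat_unit[of M, symmetric])
     (simp add: multilin_update_sum[OF assms] multilin_update_scale[OF assms])

text \<open>Expanding one slot at a time in the basis \<open>mat_unit i j\<close> writes \<open>T (\<lambda>r. C r x)\<close> as a
  polynomial in the entries of the \<open>C r x\<close>.\<close>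

lemma hol_fun_multilin:
  fixes C :: "nat \<Rightarrow> complex^'n \<Rightarrow> complex^'n^'n"
  assumes T: "multilin cmscale k T" and C: "\<And>r. r < k \<Longrightarrow> hol_mat U (C r)"
  shows "hol_fun U (\<lambda>x. T (\<lambda>r. C r x))"
proof -
  have partial: "hol_fun U (\<lambda>x. T (\<lambda>r. if r < m then C r x else D r))" if "m \<le> k" for m D
    using that
  proof (induction m arbitrary: D)
    case 0
    then show ?case by (simp add: hol_fun_const)
  next
    case (Suc m)
    have "(\<lambda>r. if r < Suc m then C r x else D r) = (\<lambda>r. if r < m then C r x else D r)(m := C m x)"
      for x by (auto simp: fun_eq_iff)
    moreover have "(\<lambda>r. if r < m then C r x else D r)(m := mat_unit i j)
        = (\<lambda>r. if r < m then C r x else (D(m := mat_unit i j)) r)" for x i j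
      by (auto simp: fun_eq_iff)
    ultimately show ?case
      using Suc C[of m] multilin_update_expand[OF T, of m]
      by (simp, intro hol_fun_sum hol_fun_mult) (auto simp: hol_mat_def)
  qed
  have "hol_fun U (\<lambda>x. T (\<lambda>r. if r < k then C r x else 0))" by (rule partial) simp
  moreover have "T (\<lambda>r. if r < k then C r x else 0) = T (\<lambda>r. C r x)" for x
    by (rule multilin_cong[OF T]) simp
  ultimately show ?thesis by simp
qed

lemma Twedge_cong:
  assumes "multilin cmscale k T" and "\<And>r w. r < k \<Longrightarrow> \<Theta>s (Suc r) x w = \<Theta>s' (Suc r) y w"
  shows "Twedge T k \<Theta>s x v = Twedge T k \<Theta>s' y v"
  unfolding Twedge_def
  by (intro sum.cong refl arg_cong2[where f = "(*)"] multilin_cong[OF assms(1)])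
     (simp add: assms(2))

lemma Twedge_zero_slot:
  assumes "multilin cmscale k T" and "r < k" and "\<And>w. \<Theta>s (Suc r) x w = 0"
  shows "Twedge T k \<Theta>s x v = 0"
  unfolding Twedge_def
  by (intro sum.neutral ballI) (simp add: multilin_zero_slot[OF assms(1,2)] assms(3))

lemma hol_fun_Twedge:
  assumes "multilin cmscale k T" and "\<And>r w. r < k \<Longrightarrow> hol_mat U (\<lambda>x. \<Theta>s (Suc r) x w)"
  shows "hol_fun U (\<lambda>x. Twedge T k \<Theta>s x v)"
  unfolding Twedge_def using assms
  by (intro hol_fun_sum hol_fun_cmult hol_fun_multilin) (auto simp: finite_permutations)

lemma permutes_update_comp:
  assumes "p permutes {..<k}"
  shows "(\<lambda>r. G r ((v(s := a)) (p r))) = (\<lambda>r. G r (v (p r)))(inv p s := G (inv p s) a)"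
proof -
  have "p r = s \<longleftrightarrow> r = inv p s" for r
    using permutes_inverses[OF assms] by metis
  then show ?thesis by (auto simp: fun_eq_iff)
qed

lemma multilin_Twedge:
  fixes \<Theta>s :: "nat \<Rightarrow> ('n::finite) mform"
  assumes T: "multilin cmscale k T"
    and add: "\<And>r a b. r < k \<Longrightarrow> \<Theta>s (Suc r) x (a + b) = \<Theta>s (Suc r) x a + \<Theta>s (Suc r) x b"
    and scale: "\<And>r c a. r < k \<Longrightarrow> \<Theta>s (Suc r) x (cvscale c a) = cmscale c (\<Theta>s (Suc r) x a)"
  shows "multilin cvscale k (Twedge T k \<Theta>s x)"
  unfolding multilin_def
proof (intro conjI allI impI)
  fix s v a b assume s: "s < k"
  have "T (\<lambda>r. \<Theta>s (Suc r) x ((v(s := a + b)) (p r)))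
      = T (\<lambda>r. \<Theta>s (Suc r) x ((v(s := a)) (p r))) + T (\<lambda>r. \<Theta>s (Suc r) x ((v(s := b)) (p r)))"
    if p: "p permutes {..<k}" for p
  proof -
    have "inv p s < k" using permutes_in_image[OF permutes_inv[OF p]] s by simp
    then show ?thesis
      unfolding permutes_update_comp[OF p, of "\<lambda>r. \<Theta>s (Suc r) x"] add[OF \<open>inv p s < k\<close>]
      by (rule multilin_update_add[OF T])
  qed
  then show "Twedge T k \<Theta>s x (v(s := a + b)) = Twedge T k \<Theta>s x (v(s := a)) + Twedge T k \<Theta>s x (v(s := b))"
    unfolding Twedge_def by (simp add: sum.distrib[symmetric] distrib_left)
next
  fix s v a c assume s: "s < k"
  have "T (\<lambda>r. \<Theta>s (Suc r) x ((v(s := cvscale c a)) (p r))) = c * T (\<lambda>r. \<Theta>s (Suc r) x ((v(s := a)) (p r)))"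
    if p: "p permutes {..<k}" for p
  proof -
    have "inv p s < k" using permutes_in_image[OF permutes_inv[OF p]] s by simp
    then show ?thesis
      unfolding permutes_update_comp[OF p, of "\<lambda>r. \<Theta>s (Suc r) x"] scale[OF \<open>inv p s < k\<close>]
      by (rule multilin_update_scale[OF T])
  qed
  then show "Twedge T k \<Theta>s x (v(s := cvscale c a)) = c * Twedge T k \<Theta>s x (v(s := a))"
    unfolding Twedge_def by (simp add: sum_distrib_left mult_ac)
next
  fix v w :: "nat \<Rightarrow> complex^'n" assume vw: "\<forall>r<k. v r = w r"
  have "T (\<lambda>r. \<Theta>s (Suc r) x (v (p r))) = T (\<lambda>r. \<Theta>s (Suc r) x (w (p r)))"
    if p: "p permutes {..<k}" for p
    by (rule multilin_cong[OF T]) (use vw permutes_in_image[OF p] in auto)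
  then show "Twedge T k \<Theta>s x v = Twedge T k \<Theta>s x w"
    unfolding Twedge_def by (intro sum.cong) auto
qed

text \<open>Composing with the transposition of two slots carrying equal vectors is a bijection of
  the permutations that flips the sign, so the sum cancels against itself.\<close>

lemma alternating_Twedge:
  fixes \<Theta>s :: "nat \<Rightarrow> ('n::finite) mform"
  shows "alternating k (Twedge T k \<Theta>s x)"
  unfolding alternating_def
proof (intro allI impI)
  fix v :: "nat \<Rightarrow> complex^'n" and r s assume h: "r < k \<and> s < k \<and> r \<noteq> s \<and> v r = v s"
  define t where "t = Transposition.transpose r s"
  define P where "P = {p. p permutes {..<k}}"
  define W where "W = Twedge T k \<Theta>s x v"
  have t: "t permutes {..<k}" unfolding t_def using h by (intro permutes_swap_id) auto
  have vt: "v (t i) = v i" for i using h by (auto simp: t_def Transposition.transpose_def)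
  have bij: "bij_betw ((\<circ>) t) P P"
  proof (rule bij_betw_byWitness[where f' = "(\<circ>) t"])
    show "\<forall>p\<in>P. t \<circ> (t \<circ> p) = p" by (auto simp: t_def fun_eq_iff)
    then show "\<forall>p\<in>P. t \<circ> (t \<circ> p) = p" .
    show "(\<circ>) t ` P \<subseteq> P" using permutes_compose[OF _ t] unfolding P_def by auto
    then show "(\<circ>) t ` P \<subseteq> P" .
  qed
  have sign: "sign (t \<circ> p) = - sign p" if "p \<in> P" for p
  proof -
    have "permutation p" and "permutation t"
      using that t by (auto simp: P_def intro: permutes_imp_permutation)
    then show ?thesis using sign_compose[of t p] h by (simp add: t_def sign_swap_id)
  qed
  have "W = (\<Sum>p\<in>P. of_int (sign (t \<circ> p)) * T (\<lambda>r. \<Theta>s (Suc r) x (v ((t \<circ> p) r))))"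
    unfolding W_def Twedge_def P_def[symmetric]
    using sum.reindex_bij_betw[OF bij, of "\<lambda>p. of_int (sign p) * T (\<lambda>r. \<Theta>s (Suc r) x (v (p r)))"]
    by simp
  also have "\<dots> = - W"
    unfolding W_def Twedge_def P_def[symmetric] by (simp add: sign vt sum_negf)
  finally show "Twedge T k \<Theta>s x v = 0" unfolding W_def by simp
qed

definition coface :: "nat \<Rightarrow> nat \<Rightarrow> nat" where
  "coface j r = (if r < j then r else Suc r)"

text \<open>In the slot where the index jumps over \<open>j\<close>, additivity splits the \<open>j\<close>-th face term
  into \<open>S j + S (j - 1)\<close>; these cancel in the alternating sum.\<close>

lemma multilin_coface_split:
  fixes g :: "nat \<Rightarrow> nat \<Rightarrow> complex^'n^'n"
  assumes T: "multilin cmscale k T" and j: "j < Suc (Suc k)"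
  defines "S \<equiv> \<lambda>i. T (\<lambda>r. if r < i then g r r - g (Suc r) r else g (Suc r) r - g (Suc (Suc r)) r)"
  shows "T (\<lambda>r. g (coface j r) r - g (coface j (Suc r)) r)
           = (if j \<le> k then S j else 0) + (if 0 < j then S (j - 1) else 0)"
proof (cases j)
  case 0
  then show ?thesis by (simp add: S_def coface_def)
next
  case (Suc i)
  show ?thesis
  proof (cases "i = k")
    case True
    have "T (\<lambda>r. g (coface j r) r - g (coface j (Suc r)) r) = S k"
      unfolding S_def by (rule multilin_cong[OF T]) (simp add: Suc True coface_def)
    then show ?thesis using Suc True by simp
  next
    case False
    with j Suc have i: "i < k" by simp
    define f where "f = (\<lambda>r. g (coface j r) r - g (coface j (Suc r)) r)"
    have "f = f(i := (g i i - g (Suc i) i) + (g (Suc i) i - g (Suc (Suc i)) i))"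
      by (simp add: fun_eq_iff f_def coface_def Suc)
    moreover have "f(i := g i i - g (Suc i) i)
        = (\<lambda>r. if r < j then g r r - g (Suc r) r else g (Suc r) r - g (Suc (Suc r)) r)"
      by (auto simp: fun_eq_iff f_def coface_def Suc)
    moreover have "f(i := g (Suc i) i - g (Suc (Suc i)) i)
        = (\<lambda>r. if r < i then g r r - g (Suc r) r else g (Suc r) r - g (Suc (Suc r)) r)"
      by (auto simp: fun_eq_iff f_def coface_def Suc)
    ultimately have "T f = S j + S i"
      unfolding S_def by (metis multilin_update_add[OF T i])
    then show ?thesis using Suc i by (simp add: f_def)
  qed
qed

lemma multilin_alternating_coface_sum:
  fixes g :: "nat \<Rightarrow> nat \<Rightarrow> complex^'n^'n"
  assumes T: "multilin cmscale k T"
  shows "(\<Sum>j<Suc (Suc k). (-1)^j * T (\<lambda>r. g (coface j r) r - g (coface j (Suc r)) r)) = 0"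
proof -
  define S where "S = (\<lambda>i. T (\<lambda>r. if r < i then g r r - g (Suc r) r
                                   else g (Suc r) r - g (Suc (Suc r)) r))"
  have "(\<Sum>j<Suc (Suc k). (-1)^j * T (\<lambda>r. g (coface j r) r - g (coface j (Suc r)) r))
      = (\<Sum>j<Suc (Suc k). (-1)^j * ((if j \<le> k then S j else 0) + (if 0 < j then S (j - 1) else 0)))"
    by (intro sum.cong refl) (simp add: multilin_coface_split[OF T] S_def)
  also have "\<dots> = (\<Sum>j<Suc (Suc k). (-1)^j * (if j \<le> k then S j else 0))
        + (\<Sum>j<Suc (Suc k). (-1)^j * (if 0 < j then S (j - 1) else 0))"
    by (simp add: distrib_left sum.distrib)
  also have "(\<Sum>j<Suc (Suc k). (-1)^j * (if j \<le> k then S j else 0)) = (\<Sum>j<Suc k. (-1)^j * S j)"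
    by (simp add: less_Suc_eq_le)
  also have "(\<Sum>j<Suc (Suc k). (-1)^j * (if 0 < j then S (j - 1) else 0))
      = - (\<Sum>j<Suc k. (-1)^j * S j)"
    by (subst sum.lessThan_Suc_shift) (simp add: sum_negf)
  finally show ?thesis by simp
qed

lemma Twedge_alternating_coface_sum:
  fixes \<theta>s :: "nat \<Rightarrow> complex^'n \<Rightarrow> complex^'n^'n"
  assumes T: "multilin cmscale k T"
  shows "(\<Sum>j<Suc (Suc k). (-1)^j *
           Twedge T k (\<lambda>r y w. \<theta>s (coface j (r - 1)) w - \<theta>s (coface j r) w) x v) = 0"
proof -
  define P where "P = {p. p permutes {..<k}}"
  define X where "X = (\<lambda>j p. T (\<lambda>r. \<theta>s (coface j r) (v (p r)) - \<theta>s (coface j (Suc r)) (v (p r))))"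
  have "(\<Sum>j<Suc (Suc k). (-1)^j *
           Twedge T k (\<lambda>r y w. \<theta>s (coface j (r - 1)) w - \<theta>s (coface j r) w) x v)
      = (\<Sum>j<Suc (Suc k). \<Sum>p\<in>P. (-1)^j * (of_int (sign p) * X j p))"
    by (simp add: Twedge_def P_def X_def sum_distrib_left)
  also have "\<dots> = (\<Sum>p\<in>P. \<Sum>j<Suc (Suc k). (-1)^j * (of_int (sign p) * X j p))"
    by (rule sum.swap)
  also have "\<dots> = (\<Sum>p\<in>P. of_int (sign p) * (\<Sum>j<Suc (Suc k). (-1)^j * X j p))"
    by (simp only: sum_distrib_left mult.left_commute)
  also have "\<dots> = 0"
  proof (intro sum.neutral ballI)
    fix p
    have "(\<Sum>j<Suc (Suc k). (-1)^j * X j p) = 0"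
      unfolding X_def by (rule multilin_alternating_coface_sum[OF T, of "\<lambda>i r. \<theta>s i (v (p r))"])
    then show "of_int (sign p) * (\<Sum>j<Suc (Suc k). (-1)^j * X j p) = 0" by simp
  qed
  finally show ?thesis .
qed

section \<open>A closed formula for tau\<close>

lemma gl_invariant_conj:
  assumes T: "gl_invariant k T" and A: "invertible A"
  shows "T (\<lambda>r. A ** M r ** minv A) = T M"
proof -
  have "invertible (minv A)"
    using invertible_minv[OF A] unfolding invertible_def by blast
  moreover have "minv (minv A) = A" by (rule minv_eq) (rule invertible_minv(2)[OF A])
  ultimately show ?thesis
    using T unfolding gl_invariant_def by metis
qed

lemma Twedge_change_vars:
  assumes "multilin cmscale k T" and "\<And>r w. r < k \<Longrightarrow> \<Theta>s (Suc r) y (A *v w) = \<Theta>s' (Suc r) x w"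
  shows "Twedge T k \<Theta>s y (\<lambda>i. A *v v i) = Twedge T k \<Theta>s' x v"
  unfolding Twedge_def
  by (intro sum.cong refl arg_cong2[where f = "(*)"] multilin_cong[OF assms(1)])
     (simp add: assms(2))

lemma sharp_conj:
  assumes "invertible (jac F x)"
  shows "\<Theta> (F x) (jac F x *v w) = jac F x ** sharp F \<Theta> x w ** minv (jac F x)"
proof -
  have "jac F x ** sharp F \<Theta> x w ** minv (jac F x)
      = (jac F x ** minv (jac F x)) ** \<Theta> (F x) (jac F x *v w) ** (jac F x ** minv (jac F x))"
    unfolding sharp_def by (simp add: matrix_mul_assoc)
  then show ?thesis by (simp add: invertible_minv[OF assms])
qed

text \<open>\<open>theta_wedge T k \<sigma>\<close> is \<open>T[theta \<sigma>\<^sub>0 - theta \<sigma>\<^sub>1, \<dots>, theta \<sigma>\<^bsub>k-1\<^esub> - theta \<sigma>\<^sub>k]\<close>; index \<open>r\<close>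
  of the family passed to \<open>Twedge\<close> runs from \<open>1\<close> to \<open>k\<close>, as in \<open>tau\<close>.\<close>

definition theta_wedge :: "((nat \<Rightarrow> complex^'n^'n) \<Rightarrow> complex) \<Rightarrow> nat
                           \<Rightarrow> (nat \<Rightarrow> complex^'n \<Rightarrow> complex^'n) \<Rightarrow> 'n kform" where
  "theta_wedge T k \<sigma> = Twedge T k (\<lambda>r y w. theta (\<sigma> (r - 1)) y w - theta (\<sigma> r) y w)"

lemma tau_eq_theta_wedge:
  assumes T: "multilin cmscale k T" and gl: "gl_invariant k T"
    and charts: "\<And>i. i \<le> k \<Longrightarrow> chart U (\<sigma>s ! i)" and x: "x \<in> U"
  shows "tau T k U \<sigma>s x v = theta_wedge T k (nth \<sigma>s) x v"
proof -
  define J where "J = jac (\<sigma>s ! k) x"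
  have J: "invertible J"
    using hol_regular_chart[OF charts[of k]] x unfolding hol_regular_def J_def by auto
  define \<Theta>s where "\<Theta>s = (\<lambda>r. sharp ((\<sigma>s ! r) \<circ> inv_into U (\<sigma>s ! k))
                                 (theta ((\<sigma>s ! (r - 1)) \<circ> inv_into U (\<sigma>s ! r))))"
  have "\<Theta>s (Suc r) ((\<sigma>s ! k) x) (J *v w)
      = J ** (theta (\<sigma>s ! r) x w - theta (\<sigma>s ! Suc r) x w) ** minv J" if "r < k" for r w
    using that unfolding \<Theta>s_def J_def
    by (simp add: sharp_conj[OF J[unfolded J_def]] sharp_sharp_transition sharp_theta_transition
        charts x)
  then have "tau T k U \<sigma>s x v
      = Twedge T k (\<lambda>r y w. J ** (theta (\<sigma>s ! (r - 1)) y w - theta (\<sigma>s ! r) y w) ** minv J) x v"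
    unfolding tau_def Let_def pullk_def \<Theta>s_def[symmetric] J_def[symmetric]
    by (intro Twedge_change_vars[OF T]) simp
  also have "\<dots> = theta_wedge T k (nth \<sigma>s) x v"
    unfolding Twedge_def theta_wedge_def gl_invariant_conj[OF gl J] ..
  finally show ?thesis .
qed

lemma theta_wedge_cong:
  assumes "multilin cmscale k T" and "\<And>i. i \<le> k \<Longrightarrow> \<sigma> i = \<sigma>' i"
  shows "theta_wedge T k \<sigma> x v = theta_wedge T k \<sigma>' x v"
  unfolding theta_wedge_def by (rule Twedge_cong[OF assms(1)]) (simp add: assms(2))

lemma hol_kform_theta_wedge:
  assumes T: "multilin cmscale k T" and charts: "\<And>i. i \<le> k \<Longrightarrow> chart U (\<sigma> i)"
  shows "hol_kform k U (theta_wedge T k \<sigma>)"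
  unfolding hol_kform_def theta_wedge_def
proof (intro conjI ballI allI)
  fix x assume x: "x \<in> U"
  show "multilin cvscale k (Twedge T k (\<lambda>r y w. theta (\<sigma> (r - 1)) y w - theta (\<sigma> r) y w) x)"
  proof (rule multilin_Twedge[OF T])
    fix r assume "r < k"
    then have "chart U (\<sigma> r)" and "chart U (\<sigma> (Suc r))" by (simp_all add: charts)
    then show "theta (\<sigma> (Suc r - 1)) x (a + b) - theta (\<sigma> (Suc r)) x (a + b)
        = (theta (\<sigma> (Suc r - 1)) x a - theta (\<sigma> (Suc r)) x a)
          + (theta (\<sigma> (Suc r - 1)) x b - theta (\<sigma> (Suc r)) x b)"
      and "theta (\<sigma> (Suc r - 1)) x (cvscale c a) - theta (\<sigma> (Suc r)) x (cvscale c a)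
        = cmscale c (theta (\<sigma> (Suc r - 1)) x a - theta (\<sigma> (Suc r)) x a)" for a b c
      using x by (simp_all add: theta_chart_add theta_chart_cvscale cmscale_diff)
  qed
  show "alternating k (Twedge T k (\<lambda>r y w. theta (\<sigma> (r - 1)) y w - theta (\<sigma> r) y w) x)"
    by (rule alternating_Twedge)
next
  fix js
  show "hol_fun U (\<lambda>x. Twedge T k (\<lambda>r y w. theta (\<sigma> (r - 1)) y w - theta (\<sigma> r) y w) x
                         (\<lambda>i. axis (js i) 1))"
    by (rule hol_fun_Twedge[OF T]) (simp add: hol_mat_diff hol_mat_theta_chart charts)
qed

lemma theta_wedge_repeated_chart:
  assumes "multilin cmscale k T" and "r < k" and "\<sigma> r = \<sigma> (Suc r)"
  shows "theta_wedge T k \<sigma> x v = 0"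
  unfolding theta_wedge_def by (rule Twedge_zero_slot[OF assms(1,2)]) (simp add: assms(3))

lemma theta_wedge_alternating_coface_sum:
  assumes "multilin cmscale k T"
  shows "(\<Sum>j<Suc (Suc k). (-1)^j * theta_wedge T k (\<sigma> \<circ> coface j) x v) = 0"
  using Twedge_alternating_coface_sum[OF assms, of "\<lambda>i. theta (\<sigma> i) x"]
  by (simp add: theta_wedge_def Twedge_def)

section \<open>Cf is a natural map of simplicial sets\<close>

lemma hol_kform_cong_open:
  assumes "hol_kform k U \<omega>" and "open U" and "\<And>x. x \<in> U \<Longrightarrow> \<omega> x = \<omega>' x"
  shows "hol_kform k U \<omega>'"
  using assms hol_fun_cong_open[of U "\<lambda>x. \<omega> x (\<lambda>i. axis (_ i) 1)"]
  unfolding hol_kform_def by simp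

lemma kcells_sorted_list:
  assumes "c \<in> kcells k m"
  shows "finite c" and "length (sorted_list_of_set c) = Suc k"
    and "\<And>i. i \<le> k \<Longrightarrow> sorted_list_of_set c ! i \<in> c"
    and "\<And>i. i \<le> k \<Longrightarrow> sorted_list_of_set c ! i \<le> m"
proof -
  have c: "c \<subseteq> {0..m}" and card: "card c = Suc k" using assms by (auto simp: kcells_def)
  show fin: "finite c" using card card.infinite by fastforce
  show len: "length (sorted_list_of_set c) = Suc k" using card by simp
  show mem: "\<And>i. i \<le> k \<Longrightarrow> sorted_list_of_set c ! i \<in> c"
    using len fin nth_mem[of _ "sorted_list_of_set c"] by fastforce
  then show "\<And>i. i \<le> k \<Longrightarrow> sorted_list_of_set c ! i \<le> m" using c by fastforce
qed

lemma chart_simplex_kcell: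
  assumes "chart_simplex U m \<rho>" and "c \<in> kcells k m" and "i \<le> k"
  shows "chart U (\<rho> (sorted_list_of_set c ! i))"
  using assms kcells_sorted_list(4) unfolding chart_simplex_def by blast

lemma kcells_face:
  assumes d: "d \<in> kcells (Suc k) m" and j: "j < Suc (Suc k)"
  defines "ds \<equiv> sorted_list_of_set d"
  shows "d - {ds ! j} \<in> kcells k m"
    and "\<And>r. r \<le> k \<Longrightarrow> sorted_list_of_set (d - {ds ! j}) ! r = ds ! coface j r"
proof -
  have fin: "finite d" and len: "length ds = Suc (Suc k)"
    using kcells_sorted_list[OF d] unfolding ds_def by auto
  have mem: "ds ! j \<in> d" using kcells_sorted_list(3)[OF d] j unfolding ds_def by simp
  show "d - {ds ! j} \<in> kcells k m"
    using d mem fin by (auto simp: kcells_def)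
  have "ds ! j \<notin> set (take j ds)"
  proof
    assume "ds ! j \<in> set (take j ds)"
    then obtain i where "i < j" and "ds ! i = ds ! j" by (auto simp: in_set_conv_nth)
    moreover have "distinct ds" unfolding ds_def by simp
    ultimately show False using j len unfolding distinct_conv_nth by (metis less_trans nat_neq_iff)
  qed
  moreover have "ds = take j ds @ ds ! j # drop (Suc j) ds"
    by (rule id_take_nth_drop) (use j len in simp)
  ultimately have "remove1 (ds ! j) ds = take j ds @ drop (Suc j) ds"
    by (metis remove1_append remove1.simps(2))
  moreover have "sorted_list_of_set (d - {ds ! j}) = remove1 (ds ! j) ds"
    unfolding ds_def using fin by (rule sorted_list_of_set_remove)
  ultimately show "sorted_list_of_set (d - {ds ! j}) ! r = ds ! coface j r" if "r \<le> k" for r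
    using that j len by (auto simp: coface_def nth_append min_def)
qed

lemma mono_on_sorted_list_cases:
  fixes \<alpha> :: "nat \<Rightarrow> nat"
  assumes "mono_on A \<alpha>" and "set L \<subseteq> A" and "sorted_wrt (<) L"
  obtains "sorted_wrt (<) (map \<alpha> L)"
    | i where "Suc i < length L" and "\<alpha> (L ! i) = \<alpha> (L ! Suc i)"
proof (cases "\<exists>i. Suc i < length L \<and> \<alpha> (L ! i) = \<alpha> (L ! Suc i)")
  case False
  have "\<alpha> (L ! i) < \<alpha> (L ! Suc i)" if "Suc i < length L" for i
  proof -
    have "L ! i < L ! Suc i" using assms(3) that by (simp add: sorted_wrt_iff_nth_less)
    moreover have "L ! i \<in> A" and "L ! Suc i \<in> A" using assms(2) that by auto
    ultimately have "\<alpha> (L ! i) \<le> \<alpha> (L ! Suc i)" using assms(1) by (simp add: mono_onD)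
    with False that show ?thesis by (simp add: le_neq_implies_less)
  qed
  then have "sorted_wrt (<) (map \<alpha> L)"
    by (subst sorted_wrt_iff_nth_Suc_transp) (auto simp: transp_def)
  then show ?thesis by (rule that(1))
qed (use that(2) in blast)

lemma Cf_eq_theta_wedge:
  assumes T: "multilin cmscale k T" and gl: "gl_invariant k T"
    and \<rho>: "chart_simplex U m \<rho>" and c: "c \<in> kcells k m" and x: "x \<in> U"
  shows "Cf T k U \<rho> c x v = theta_wedge T k (\<lambda>i. \<rho> (sorted_list_of_set c ! i)) x v"
proof -
  have len: "length (sorted_list_of_set c) = Suc k" by (rule kcells_sorted_list(2)[OF c])
  have "Cf T k U \<rho> c x v = theta_wedge T k (nth (map \<rho> (sorted_list_of_set c))) x v"
    unfolding Cf_def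
    by (rule tau_eq_theta_wedge[OF T gl _ x])
       (metis chart_simplex_kcell[OF \<rho> c] len le_imp_less_Suc nth_map)
  also have "\<dots> = theta_wedge T k (\<lambda>i. \<rho> (sorted_list_of_set c ! i)) x v"
    by (rule theta_wedge_cong[OF T]) (metis len le_imp_less_Suc nth_map)
  finally show ?thesis .
qed

lemma hol_kform_Cf:
  assumes T: "multilin cmscale k T" and gl: "gl_invariant k T" and U: "open U"
    and \<rho>: "chart_simplex U m \<rho>" and c: "c \<in> kcells k m"
  shows "hol_kform k U (Cf T k U \<rho> c)"
proof -
  have "hol_kform k U (theta_wedge T k (\<lambda>i. \<rho> (sorted_list_of_set c ! i)))"
    by (rule hol_kform_theta_wedge[OF T chart_simplex_kcell[OF \<rho> c]])
  then show ?thesis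
    by (rule hol_kform_cong_open[OF _ U]) (intro ext, simp add: Cf_eq_theta_wedge[OF T gl \<rho> c])
qed

lemma Cf_alternating_face_sum:
  assumes T: "multilin cmscale k T" and gl: "gl_invariant k T"
    and \<rho>: "chart_simplex U m \<rho>" and d: "d \<in> kcells (Suc k) m" and x: "x \<in> U"
  shows "(\<Sum>j<Suc (Suc k). (-1)^j * Cf T k U \<rho> (d - {sorted_list_of_set d ! j}) x v) = 0"
proof -
  define \<sigma> where "\<sigma> = (\<lambda>i. \<rho> (sorted_list_of_set d ! i))"
  have "Cf T k U \<rho> (d - {sorted_list_of_set d ! j}) x v = theta_wedge T k (\<sigma> \<circ> coface j) x v"
    if "j < Suc (Suc k)" for j
    unfolding Cf_eq_theta_wedge[OF T gl \<rho> kcells_face(1)[OF d that] x]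
    by (rule theta_wedge_cong[OF T]) (simp add: \<sigma>_def kcells_face(2)[OF d that])
  then show ?thesis
    using theta_wedge_alternating_coface_sum[OF T, of \<sigma> x v] by simp
qed

text \<open>A monotone \<open>\<alpha>\<close> is either strictly increasing on the cell \<open>c\<close>, and then \<open>\<rho> \<circ> \<alpha>\<close>
  lists on \<open>c\<close> the charts that \<open>\<rho>\<close> lists on \<open>\<alpha> ` c\<close>, or it identifies two consecutive
  vertices of \<open>c\<close>, and then \<open>Cf\<close> vanishes by \<open>theta_wedge_repeated_chart\<close>.\<close>

lemma Cf_simplicial_operator:
  assumes T: "multilin cmscale k T" and gl: "gl_invariant k T"
    and \<rho>: "chart_simplex U m \<rho>" and \<alpha>: "\<forall>i\<le>m'. \<alpha> i \<le> m" and mono: "mono_on {0..m'} \<alpha>"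
    and c: "c \<in> kcells k m'" and x: "x \<in> U"
  shows "Cf T k U (\<rho> \<circ> \<alpha>) c x v = omega_act \<alpha> (Cf T k U \<rho>) c x v"
proof -
  define L where "L = sorted_list_of_set c"
  have fin: "finite c" and len: "length L = Suc k"
    using kcells_sorted_list[OF c] unfolding L_def by auto
  have setL: "set L = c" and sorted: "sorted_wrt (<) L" using fin unfolding L_def by auto
  have "set L \<subseteq> {0..m'}" using c setL by (auto simp: kcells_def)
  from mono this sorted show ?thesis
  proof (cases rule: mono_on_sorted_list_cases)
    case 1
    then have "distinct (map \<alpha> L)" by (simp add: strict_sorted_iff)
    then have inj: "inj_on \<alpha> c" and "length (map \<alpha> L) = card (\<alpha> ` c)"
      using setL distinct_card[of "map \<alpha> L"] by (auto simp: distinct_map)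
    with 1 have "sorted_list_of_set (\<alpha> ` c) = map \<alpha> L"
      using sorted_list_of_set_unique[of "\<alpha> ` c" "map \<alpha> L"] fin setL by simp
    then show ?thesis
      unfolding omega_act_def Cf_def using inj by (simp add: L_def)
  next
    case (2 i)
    have "L ! i < L ! Suc i" using sorted 2(1) unfolding sorted_wrt_iff_nth_less by blast
    then have "\<not> inj_on \<alpha> c" using 2 setL by (metis inj_on_def Suc_lessD nth_mem less_irrefl)
    moreover have \<rho>\<alpha>: "chart_simplex U m' (\<rho> \<circ> \<alpha>)"
      using \<rho> \<alpha> unfolding chart_simplex_def by auto
    ultimately show ?thesis
      unfolding omega_act_def Cf_eq_theta_wedge[OF T gl \<rho>\<alpha> c x]
      using 2 len by (simp add: theta_wedge_repeated_chart[OF T] L_def)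
  qed
qed

lemma hol_embed_chart:
  assumes e: "hol_embed U' U \<phi>" and c: "chart U \<sigma>"
  shows "open ((\<sigma> \<circ> \<phi>) ` U')"
    and "\<And>x. x \<in> U' \<Longrightarrow> inv_into U' (\<sigma> \<circ> \<phi>) ((\<sigma> \<circ> \<phi>) x) = x"
    and "\<And>x. x \<in> U' \<Longrightarrow> inv_into U \<sigma> ((\<sigma> \<circ> \<phi>) x) = \<phi> x"
proof -
  have \<phi>: "biholo U' \<phi>" and sub: "\<phi> ` U' \<subseteq> U" using e unfolding hol_embed_def by auto
  have inj\<sigma>: "inj_on \<sigma> U" by (rule chartD(5)[OF c])
  have "(\<sigma> \<circ> \<phi>) ` U' = \<sigma> ` U \<inter> inv_into U \<sigma> -` (\<phi> ` U')"
  proof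
    show "(\<sigma> \<circ> \<phi>) ` U' \<subseteq> \<sigma> ` U \<inter> inv_into U \<sigma> -` (\<phi> ` U')"
      using sub inj\<sigma> by (auto simp: inv_into_f_f)
    show "\<sigma> ` U \<inter> inv_into U \<sigma> -` (\<phi> ` U') \<subseteq> (\<sigma> \<circ> \<phi>) ` U'"
    proof
      fix y assume y: "y \<in> \<sigma> ` U \<inter> inv_into U \<sigma> -` (\<phi> ` U')"
      then obtain x' where "x' \<in> U'" and "inv_into U \<sigma> y = \<phi> x'" by auto
      moreover have "\<sigma> (inv_into U \<sigma> y) = y" using y by (simp add: f_inv_into_f)
      ultimately show "y \<in> (\<sigma> \<circ> \<phi>) ` U'" by force
    qed
  qed
  moreover have "open (\<sigma> ` U \<inter> inv_into U \<sigma> -` (\<phi> ` U'))"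
    using \<phi> unfolding biholo_def
    by (intro continuous_open_preimage hol_map_continuous_on chartD[OF c]) auto
  ultimately show "open ((\<sigma> \<circ> \<phi>) ` U')" by simp
  have "inj_on (\<sigma> \<circ> \<phi>) U'"
    using \<phi> inj_on_subset[OF inj\<sigma> sub] unfolding biholo_def by (blast intro: comp_inj_on)
  then show "\<And>x. x \<in> U' \<Longrightarrow> inv_into U' (\<sigma> \<circ> \<phi>) ((\<sigma> \<circ> \<phi>) x) = x"
    by (rule inv_into_f_f)
  show "\<And>x. x \<in> U' \<Longrightarrow> inv_into U \<sigma> ((\<sigma> \<circ> \<phi>) x) = \<phi> x"
    using inj\<sigma> sub by (auto simp: inv_into_f_f)
qed

lemma transition_hol_embed:
  assumes e: "hol_embed U' U \<phi>" and cq: "chart U \<sigma>q" and z: "z \<in> (\<sigma>q \<circ> \<phi>) ` U'"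
  shows "((\<sigma>p \<circ> \<phi>) \<circ> inv_into U' (\<sigma>q \<circ> \<phi>)) z = (\<sigma>p \<circ> inv_into U \<sigma>q) z"
proof -
  from z obtain x' where "x' \<in> U'" and "z = (\<sigma>q \<circ> \<phi>) x'" by blast
  then show ?thesis using hol_embed_chart(2,3)[OF e cq] by simp
qed

lemma tau_hol_embed:
  assumes T: "multilin cmscale k T" and e: "hol_embed U' U \<phi>" and len: "length \<sigma>s = Suc k"
    and charts: "\<And>i. i \<le> k \<Longrightarrow> chart U (\<sigma>s ! i)" and x: "x \<in> U'"
  shows "tau T k U' (map (\<lambda>\<sigma>. \<sigma> \<circ> \<phi>) \<sigma>s) x v = pullk \<phi> (tau T k U \<sigma>s) x v"
proof -
  define \<sigma>s' where "\<sigma>s' = map (\<lambda>\<sigma>. \<sigma> \<circ> \<phi>) \<sigma>s"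
  have \<sigma>s': "\<sigma>s' ! i = \<sigma>s ! i \<circ> \<phi>" if "i \<le> k" for i
    using that len by (simp add: \<sigma>s'_def)
  define \<Phi> where "\<Phi> = (\<lambda>p q. (\<sigma>s ! p) \<circ> inv_into U (\<sigma>s ! q))"
  define \<Phi>' where "\<Phi>' = (\<lambda>p q. (\<sigma>s' ! p) \<circ> inv_into U' (\<sigma>s' ! q))"
  define \<Theta>s where "\<Theta>s = (\<lambda>r. sharp (\<Phi> r k) (theta (\<Phi> (r - 1) r)))"
  define \<Theta>s' where "\<Theta>s' = (\<lambda>r. sharp (\<Phi>' r k) (theta (\<Phi>' (r - 1) r)))"
  define y where "y = (\<sigma>s ! k) (\<phi> x)"
  have \<phi>: "hol_map U' \<phi>" and \<phi>x: "\<phi> x \<in> U"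
    using e x unfolding hol_embed_def biholo_def by auto
  have restrict: "\<Phi>' p q z = \<Phi> p q z" if "p \<le> k" "q \<le> k" "z \<in> (\<sigma>s ! q \<circ> \<phi>) ` U'" for p q z
    using transition_hol_embed[OF e charts[OF that(2)] that(3)] that(1,2)
    by (simp add: \<Phi>_def \<Phi>'_def \<sigma>s')
  have "\<Theta>s' (Suc r) y w = \<Theta>s (Suc r) y w" if "r < k" for r w
    unfolding \<Theta>s_def \<Theta>s'_def diff_Suc_1
  proof (rule sharp_cong_open[OF hol_embed_chart(1)[OF e charts[of k]]])
    show "y \<in> (\<sigma>s ! k \<circ> \<phi>) ` U'" using x by (simp add: y_def)
    show "\<Phi>' (Suc r) k z = \<Phi> (Suc r) k z" if "z \<in> (\<sigma>s ! k \<circ> \<phi>) ` U'" for z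
      using restrict that \<open>r < k\<close> by simp
    have "\<Phi>' (Suc r) k y = (\<sigma>s ! Suc r \<circ> \<phi>) x"
      using x \<open>r < k\<close> hol_embed_chart(2)[OF e charts[of k]] by (simp add: \<Phi>'_def \<sigma>s' y_def)
    then show "theta (\<Phi>' r (Suc r)) (\<Phi>' (Suc r) k y) w' = theta (\<Phi> r (Suc r)) (\<Phi>' (Suc r) k y) w'"
      for w'
      using x \<open>r < k\<close> restrict
      by (intro theta_cong_open[OF hol_embed_chart(1)[OF e charts[of "Suc r"]]]) auto
  qed simp
  then have "Twedge T k \<Theta>s' y u = Twedge T k \<Theta>s y u" for u
    by (intro Twedge_cong[OF T])
  moreover have "jac (\<sigma>s ! k \<circ> \<phi>) x = jac (\<sigma>s ! k) (\<phi> x) ** jac \<phi> x"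
    using jac_compose[OF chartD(3)[OF charts[of k]] \<phi> \<phi>x x] by (simp add: o_def)
  ultimately show ?thesis
    unfolding \<sigma>s'_def[symmetric] tau_def Let_def pullk_def
      \<Phi>_def[symmetric] \<Phi>'_def[symmetric] \<Theta>s_def[symmetric] \<Theta>s'_def[symmetric]
    by (simp add: \<sigma>s' y_def matrix_vector_mul_assoc)
qed

lemma Cf_hol_embed:
  assumes T: "multilin cmscale k T" and e: "hol_embed U' U \<phi>"
    and \<rho>: "chart_simplex U m \<rho>" and c: "c \<in> kcells k m" and x: "x \<in> U'"
  shows "Cf T k U' (\<lambda>j. \<rho> j \<circ> \<phi>) c x v = pullk \<phi> (Cf T k U \<rho> c) x v"
proof -
  have len: "length (map \<rho> (sorted_list_of_set c)) = Suc k"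
    using kcells_sorted_list(2)[OF c] by simp
  have "tau T k U' (map (\<lambda>\<sigma>. \<sigma> \<circ> \<phi>) (map \<rho> (sorted_list_of_set c))) x v
      = pullk \<phi> (tau T k U (map \<rho> (sorted_list_of_set c))) x v"
    by (rule tau_hol_embed[OF T e len _ x])
       (metis chart_simplex_kcell[OF \<rho> c] len length_map le_imp_less_Suc nth_map)
  then show ?thesis by (simp add: Cf_def o_def)
qed

theorem proposition5p3:
  fixes T :: "(nat \<Rightarrow> complex^'n^'n) \<Rightarrow> complex" and k :: nat
  assumes "k > 0"
    and "multilin cmscale k T"
    and "gl_invariant k T"
  shows "(\<forall>(U::(complex^'n) set) m \<rho>. stein_open U \<and> chart_simplex U m \<rho> \<longrightarrow>
             omega_simplex k U m (Cf T k U \<rho>))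
       \<and> (\<forall>(U::(complex^'n) set) m m' \<alpha> \<rho>.
             stein_open U \<and> chart_simplex U m \<rho> \<and> (\<forall>i\<le>m'. \<alpha> i \<le> m) \<and> mono_on {0..m'} \<alpha> \<longrightarrow>
             (\<forall>c\<in>kcells k m'. \<forall>x\<in>U. \<forall>v.
                Cf T k U (\<rho> \<circ> \<alpha>) c x v = omega_act \<alpha> (Cf T k U \<rho>) c x v))
       \<and> (\<forall>(U::(complex^'n) set) U' \<phi> m \<rho>.
             stein_open U \<and> stein_open U' \<and> hol_embed U' U \<phi> \<and> chart_simplex U m \<rho> \<longrightarrow>
             (\<forall>c\<in>kcells k m. \<forall>x\<in>U'. \<forall>v.
                Cf T k U' (\<lambda>j. \<rho> j \<circ> \<phi>) c x v = pullk \<phi> (Cf T k U \<rho> c) x v))"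
proof (intro conjI allI impI ballI)
  fix U :: "(complex^'n) set" and m \<rho>
  assume "stein_open U \<and> chart_simplex U m \<rho>"
  then have U: "open U" and \<rho>: "chart_simplex U m \<rho>" by (auto simp: stein_open_def)
  show "omega_simplex k U m (Cf T k U \<rho>)"
    unfolding omega_simplex_def
    using hol_kform_Cf[OF assms(2,3) U \<rho>] Cf_alternating_face_sum[OF assms(2,3) \<rho>] by blast
next
  fix U :: "(complex^'n) set" and m m' \<alpha> \<rho> c x v
  assume "stein_open U \<and> chart_simplex U m \<rho> \<and> (\<forall>i\<le>m'. \<alpha> i \<le> m) \<and> mono_on {0..m'} \<alpha>"
    and c: "c \<in> kcells k m'" and x: "x \<in> U"
  then have \<rho>: "chart_simplex U m \<rho>" and \<alpha>: "\<forall>i\<le>m'. \<alpha> i \<le> m" and "mono_on {0..m'} \<alpha>"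
    by auto
  from Cf_simplicial_operator[OF assms(2,3) \<rho> \<alpha> this(3) c x]
  show "Cf T k U (\<rho> \<circ> \<alpha>) c x v = omega_act \<alpha> (Cf T k U \<rho>) c x v" .
next
  fix U :: "(complex^'n) set" and U' \<phi> m \<rho> c x v
  assume "stein_open U \<and> stein_open U' \<and> hol_embed U' U \<phi> \<and> chart_simplex U m \<rho>"
    and c: "c \<in> kcells k m" and x: "x \<in> U'"
  then have "hol_embed U' U \<phi>" and "chart_simplex U m \<rho>" by auto
  from Cf_hol_embed[OF assms(2) this c x]
  show "Cf T k U' (\<lambda>j. \<rho> j \<circ> \<phi>) c x v = pullk \<phi> (Cf T k U \<rho> c) x v" .
qed

end
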